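(* Fix an integer $s\ge2$. Let $(\mathbb{G}_n)_{n\ge1}$ be a sequence of random graphs, $\mathbb{G}_n$ on $n$ vertices, and let $\mathbf{c}_n(s)=(c_{1,n},\ldots,c_{s,n})$ be compositions of $n$ into $s$ positive parts such that the color distribution $n^{-1}\mathbf{c}_n(s)$ is bounded away from both the boundary and the center $\boldsymbol{\upsilon}_s=s^{-1}\mathbf{1}_s$ of the standard simplex $\Delta_s$ (i.e. $\liminf_n\min_i c_{i,n}/n>0$ and $\liminf_n\|n^{-1}\mathbf{c}_n(s)-\boldsymbol{\upsilon}_s\|>0$). Given $\mathbb{G}_n$, color it by a uniformly random $\mathbf{c}_n(s)$-coloring, and let $M(\mathbb{G}_n)$ be the number of edges whose two ends receive the same color. Let $\mathsf{m}(\mathbb{G}_n)$ denote the number of edges of $\mathbb{G}_n$ and $\Sigma_2(\mathbb{G}_n)$ the sum of squared degrees of $\mathbb{G}_n$, and $\zeta(\mathbb{G}_n)=\sqrt{\Sigma_2(\mathbb{G}_n)}/\mathsf{m}(\mathbb{G}_n)$. Assume ( * ) $\mathbb{E}(\mathsf{m}(\mathbb{G}_n))$ is bounded away from zero and $\mathsf{m}(\mathbb{G}_n)/\mathbb{E}(\mathsf{m}(\mathbb{G}_n))\to 1$ in quadratic mean. Then $M(\mathbb{G}_n)$ concentrates around its mean (i.e. $M(\mathbb{G}_n)/\mathbb{E}[M(\mathbb{G}_n)]\to1$ in probability) if and only if $$\frac{\mathbb{E}[\Sigma_2(\mathbb{G}_n)]}{\big[\mathbb{E}[\mathsf{m}(\mathbb{G}_n)]\big]^2}\to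 0,$$ and moreover this condition is equivalent to $\zeta(\mathbb{G}_n)\to 0$ in probability.
   Context: A $\mathbf{c}$-coloring of an $n$-vertex graph $G$, for a composition $\mathbf{c}=(c_1,\ldots,c_s)$ of $n$, is a surjective map $f:V(G)\to[s]$ with $|f^{-1}(i)|=c_i$ for all $i$; the set of such colorings carries the uniform probability measure. The standard simplex is $\Delta_s=\{x\in\mathbb{R}^s_{\ge0}:\sum_i x_i=1\}$ and $\|\cdot\|$ is the Euclidean norm. *)

theory Defs
  imports "HOL-Probability.Probability" "HOL-Library.FuncSet"
begin

definition simple_graphs :: "nat \<Rightarrow> nat set set set" where
  "simple_graphs n = {E. E \<subseteq> {e. \<exists>u v. u < n \<and> v < n \<and> u \<noteq> v \<and> e = {u, v}}}"

definition num_edges :: "nat set set \<Rightarrow> real" where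
  "num_edges E = real (card E)"

definition degree :: "nat set set \<Rightarrow> nat \<Rightarrow> nat" where
  "degree E v = card {e \<in> E. v \<in> e}"

definition Sigma2 :: "nat \<Rightarrow> nat set set \<Rightarrow> real" where
  "Sigma2 n E = (\<Sum>v<n. real (degree E v) ^ 2)"

definition zeta :: "nat \<Rightarrow> nat set set \<Rightarrow> real" where
  "zeta n E = sqrt (Sigma2 n E) / num_edges E"

definition is_composition :: "nat \<Rightarrow> nat \<Rightarrow> (nat \<Rightarrow> nat) \<Rightarrow> bool" where
  "is_composition n s c \<longleftrightarrow> (\<forall>i<s. c i > 0) \<and> (\<Sum>i<s. c i) = n"

definition colorings :: "nat \<Rightarrow> nat \<Rightarrow> (nat \<Rightarrow> nat) \<Rightarrow> (nat \<Rightarrow> nat) set" where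
  "colorings n s c = {f \<in> {..<n} \<rightarrow>\<^sub>E {..<s}. f ` {..<n} = {..<s} \<and>
      (\<forall>i<s. card {v \<in> {..<n}. f v = i} = c i)}"

definition mono_edges :: "nat set set \<Rightarrow> (nat \<Rightarrow> nat) \<Rightarrow> real" where
  "mono_edges E f = real (card {e \<in> E. \<exists>u v. e = {u, v} \<and> f u = f v})"

definition colored_graph :: "nat set set pmf \<Rightarrow> nat \<Rightarrow> nat \<Rightarrow> (nat \<Rightarrow> nat) \<Rightarrow> (nat set set \<times> (nat \<Rightarrow> nat)) pmf" where
  "colored_graph G n s c = bind_pmf G (\<lambda>E. map_pmf (\<lambda>f. (E, f)) (pmf_of_set (colorings n s c)))"

definition conv_in_prob :: "(nat \<Rightarrow> 'a pmf) \<Rightarrow> (nat \<Rightarrow> 'a \<Rightarrow> real) \<Rightarrow> real \<Rightarrow> bool" where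
  "conv_in_prob P X a \<longleftrightarrow>
     (\<forall>\<epsilon>>0. (\<lambda>n. measure_pmf.prob (P n) {x. \<bar>X n x - a\<bar> > \<epsilon>}) \<longlonglongrightarrow> 0)"

definition conv_quad_mean :: "(nat \<Rightarrow> 'a pmf) \<Rightarrow> (nat \<Rightarrow> 'a \<Rightarrow> real) \<Rightarrow> real \<Rightarrow> bool" where
  "conv_quad_mean P X a \<longleftrightarrow>
     (\<lambda>n. measure_pmf.expectation (P n) (\<lambda>x. (X n x - a) ^ 2)) \<longlonglongrightarrow> 0"

end

theory Submission
  imports Defs
begin

text \<open>Given the graph, the indicator that an edge is monochromatic has mean
  p = \<Sum>i c_i (c_i - 1) / (n (n - 1)). Two such indicators have covariance p - p^2 for equal
  edges, cherry_prob - p^2 for edges sharing a vertex, and O(1/n) for disjoint edges; the middle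
  value is bounded below by a constant because the color distribution stays away from the
  boundary and from the center of the simplex. Hence, up to constants and an error
  O(m^2 / n), the conditional variance of M is the sum \<Sigma>2 of squared degrees, while
  E M = p E m. As m / E m \<rightarrow> 1 in quadratic mean, M / E M \<rightarrow> 1 in probability iff
  the normalized conditional deviation (M - p m) / (p E m) tends to 0 in probability; since it is
  dominated by m / (p E m), this is equivalent to convergence in quadratic mean, i.e. to
  E \<Sigma>2 / (E m)^2 \<rightarrow> 0. The same domination argument for sqrt \<Sigma>2 / E m \<le> sqrt 2 m / E m,
  together with \<zeta> = (sqrt \<Sigma>2 / E m) / (m / E m), gives the equivalence with \<zeta> \<rightarrow> 0
  in probability.\<close>

section \<open>Uniform colorings with prescribed class sizes\<close>

lemma exists_coloring_with_class_sizes: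
  fixes s n :: nat and c :: "nat \<Rightarrow> nat"
  assumes "(\<Sum>i<s. c i) = n"
  shows "\<exists>f\<in>{..<n} \<rightarrow>\<^sub>E {..<s}. \<forall>i<s. card {v\<in>{..<n}. f v = i} = c i"
  using assms
proof (induction s arbitrary: n)
  case 0
  then show ?case by (auto intro!: bexI[of _ "\<lambda>_. undefined"])
next
  case (Suc s)
  define n' where "n' = (\<Sum>i<s. c i)"
  have n: "n = n' + c s" using Suc.prems by (simp add: n'_def)
  obtain f' where f': "f' \<in> {..<n'} \<rightarrow>\<^sub>E {..<s}" "\<forall>i<s. card {v\<in>{..<n'}. f' v = i} = c i"
    using Suc.IH[of n'] n'_def by auto
  define f where "f v = (if v < n' then f' v else if v < n then s else undefined)" for v
  have "f \<in> {..<n} \<rightarrow>\<^sub>E {..<Suc s}"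
    using f'(1) by (auto simp: f_def PiE_def Pi_def n extensional_def)
  moreover have "card {v\<in>{..<n}. f v = i} = c i" if "i < Suc s" for i
  proof (cases "i < s")
    case True
    have "{v\<in>{..<n}. f v = i} = {v\<in>{..<n'}. f' v = i}"
      using True f'(1) by (auto simp: f_def n PiE_def Pi_def)
    then show ?thesis using f'(2) True by simp
  next
    case False
    then have "i = s" using that by simp
    have "{v\<in>{..<n}. f v = i} = {n'..<n}"
      using f'(1) \<open>i = s\<close> by (auto simp: f_def n PiE_def Pi_def; metis leI less_irrefl)
    then show ?thesis using \<open>i = s\<close> n by simp
  qed
  ultimately show ?case by blast
qed

lemma colorings_nonempty:
  assumes "is_composition n s c"
  shows "colorings n s c \<noteq> {}"
proof -
  obtain f where f: "f \<in> {..<n} \<rightarrow>\<^sub>E {..<s}" "\<forall>i<s. card {v\<in>{..<n}. f v = i} = c i"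
    using exists_coloring_with_class_sizes[of c s n] assms by (auto simp: is_composition_def)
  have "{..<s} \<subseteq> f ` {..<n}"
  proof
    fix i assume "i \<in> {..<s}"
    then have "card {v\<in>{..<n}. f v = i} \<noteq> 0"
      using f(2) assms by (auto simp: is_composition_def)
    then show "i \<in> f ` {..<n}" by (metis (mono_tags, lifting) card.empty empty_Collect_eq imageI lessThan_iff)
  qed
  with f have "f \<in> colorings n s c" by (auto simp: colorings_def)
  then show ?thesis by blast
qed

lemma finite_colorings: "finite (colorings n s c)"
  by (rule finite_subset[of _ "{..<n} \<rightarrow>\<^sub>E {..<s}"]) (auto simp: colorings_def finite_PiE)

lemma coloring_class_card:
  assumes "f \<in> colorings n s c" "v < n"
  shows "card {w\<in>{..<n}. f w = f v} = c (f v)"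
proof -
  have "f v < s" using assms by (auto simp: colorings_def)
  then show ?thesis using assms by (auto simp: colorings_def)
qed

lemma comp_permutes_in_colorings:
  assumes \<sigma>: "\<sigma> permutes {..<n}" and f: "f \<in> colorings n s c"
  shows "f \<circ> \<sigma> \<in> colorings n s c"
proof -
  have im: "\<sigma> ` {..<n} = {..<n}" using \<sigma> by (rule permutes_image)
  have "f \<circ> \<sigma> \<in> {..<n} \<rightarrow>\<^sub>E {..<s}"
    using f \<sigma> im by (auto simp: colorings_def PiE_def Pi_def extensional_def permutes_not_in)
  moreover have "(f \<circ> \<sigma>) ` {..<n} = {..<s}"
    using f im unfolding colorings_def image_comp[symmetric] by simp
  moreover have "card {v\<in>{..<n}. (f \<circ> \<sigma>) v = i} = card {v\<in>{..<n}. f v = i}" for i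
  proof (rule bij_betw_same_card)
    show "bij_betw \<sigma> {v\<in>{..<n}. (f \<circ> \<sigma>) v = i} {v\<in>{..<n}. f v = i}"
      using permutes_inj[OF \<sigma>] im unfolding bij_betw_def by (auto simp: inj_def inj_on_def)
  qed
  ultimately show ?thesis using f by (simp add: colorings_def)
qed

lemma sum_colorings_comp_permutes:
  assumes \<sigma>: "\<sigma> permutes {..<n}"
  shows "(\<Sum>f\<in>colorings n s c. \<phi> (f \<circ> \<sigma>)) = (\<Sum>f\<in>colorings n s c. \<phi> f)"
proof -
  have "bij_betw (\<lambda>f. f \<circ> \<sigma>) (colorings n s c) (colorings n s c)"
    by (rule bij_betw_byWitness[where f' = "\<lambda>f. f \<circ> inv \<sigma>"])
      (auto simp: o_assoc[symmetric] permutes_inv_o[OF \<sigma>] comp_permutes_in_colorings[OF \<sigma>]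
        comp_permutes_in_colorings[OF permutes_inv[OF \<sigma>]])
  then show ?thesis by (rule sum.reindex_bij_betw)
qed

lemma permutes_extending_distinct_list:
  assumes "distinct ys" "set ys \<subseteq> {..<n}"
  obtains \<sigma> where "\<sigma> permutes {..<n}" "\<And>i. i < length ys \<Longrightarrow> \<sigma> i = ys ! i"
proof -
  define k where "k = length ys"
  have k: "k \<le> n"
    using card_mono[OF _ assms(2)] distinct_card[OF assms(1)] by (simp add: k_def)
  have "card ({..<n} - {..<k}) = card ({..<n} - set ys)"
    using assms k by (simp add: card_Diff_subset distinct_card k_def)
  then obtain g where g: "bij_betw g ({..<n} - {..<k}) ({..<n} - set ys)"
    by (metis finite_same_card_bij finite_Diff finite_lessThan)
  define \<sigma> where "\<sigma> x = (if x < k then ys ! x else if x < n then g x else x)" for x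
  have "bij_betw \<sigma> ({..<k} \<union> ({..<n} - {..<k})) (set ys \<union> ({..<n} - set ys))"
  proof (rule bij_betw_combine)
    show "bij_betw \<sigma> {..<k} (set ys)"
      using bij_betw_nth[OF assms(1)] by (subst bij_betw_cong[where g = "(!) ys"]) (auto simp: \<sigma>_def k_def)
    show "bij_betw \<sigma> ({..<n} - {..<k}) ({..<n} - set ys)"
      using g by (subst bij_betw_cong[where g = g]) (auto simp: \<sigma>_def)
  qed blast
  moreover have "{..<k} \<union> ({..<n} - {..<k}) = {..<n}" "set ys \<union> ({..<n} - set ys) = {..<n}"
    using k assms(2) by auto
  ultimately have "\<sigma> permutes {..<n}"
    by (intro bij_imp_permutes) (auto simp: \<sigma>_def k)
  then show ?thesis using that by (auto simp: \<sigma>_def k_def)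
qed

text \<open>Exchangeability: the joint law of the colors of distinct vertices ys depends only on
  the length of ys.\<close>

lemma sum_colorings_map_distinct:
  assumes "distinct ys" "set ys \<subseteq> {..<n}"
  shows "(\<Sum>f\<in>colorings n s c. \<Phi> (map f ys)) = (\<Sum>f\<in>colorings n s c. \<Phi> (map f [0..<length ys]))"
proof -
  obtain \<sigma> where \<sigma>: "\<sigma> permutes {..<n}" "\<And>i. i < length ys \<Longrightarrow> \<sigma> i = ys ! i"
    using permutes_extending_distinct_list[OF assms] by blast
  have "map f ys = map (f \<circ> \<sigma>) [0..<length ys]" for f :: "nat \<Rightarrow> nat"
    using \<sigma>(2) by (intro nth_equalityI) auto
  then show ?thesis
    using sum_colorings_comp_permutes[OF \<sigma>(1), of "\<lambda>f. \<Phi> (map f [0..<length ys])"] by simp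
qed

definition coloring_avg :: "nat \<Rightarrow> nat \<Rightarrow> (nat \<Rightarrow> nat) \<Rightarrow> ((nat \<Rightarrow> nat) \<Rightarrow> real) \<Rightarrow> real" where
  "coloring_avg n s c \<phi> = (\<Sum>f\<in>colorings n s c. \<phi> f) / real (card (colorings n s c))"

lemma coloring_avg_sum:
  "coloring_avg n s c (\<lambda>f. \<Sum>x\<in>A. \<phi> x f) = (\<Sum>x\<in>A. coloring_avg n s c (\<phi> x))"
  unfolding coloring_avg_def by (subst sum.swap) (simp add: sum_divide_distrib)

lemma coloring_avg_add:
  "coloring_avg n s c (\<lambda>f. \<phi> f + \<psi> f) = coloring_avg n s c \<phi> + coloring_avg n s c \<psi>"
  unfolding coloring_avg_def by (simp add: sum.distrib add_divide_distrib)

lemma coloring_avg_diff: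
  "coloring_avg n s c (\<lambda>f. \<phi> f - \<psi> f) = coloring_avg n s c \<phi> - coloring_avg n s c \<psi>"
  unfolding coloring_avg_def by (simp add: sum_subtractf diff_divide_distrib)

lemma coloring_avg_cmult: "coloring_avg n s c (\<lambda>f. k * \<phi> f) = k * coloring_avg n s c \<phi>"
  unfolding coloring_avg_def by (simp add: sum_distrib_left[symmetric])

lemma coloring_avg_const: "is_composition n s c \<Longrightarrow> coloring_avg n s c (\<lambda>f. k) = k"
  using colorings_nonempty[of n s c] finite_colorings[of n s c] by (simp add: coloring_avg_def)

lemma coloring_avg_cong:
  "(\<And>f. f \<in> colorings n s c \<Longrightarrow> \<phi> f = \<psi> f) \<Longrightarrow> coloring_avg n s c \<phi> = coloring_avg n s c \<psi>"
  unfolding coloring_avg_def by (metis (mono_tags, lifting) sum.cong)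

lemma coloring_avg_mono:
  "(\<And>f. f \<in> colorings n s c \<Longrightarrow> \<phi> f \<le> \<psi> f) \<Longrightarrow> coloring_avg n s c \<phi> \<le> coloring_avg n s c \<psi>"
  unfolding coloring_avg_def by (intro divide_right_mono sum_mono) auto

lemma coloring_avg_map_distinct:
  assumes "distinct ys" "set ys \<subseteq> {..<n}"
  shows "coloring_avg n s c (\<lambda>f. \<Phi> (map f ys)) = coloring_avg n s c (\<lambda>f. \<Phi> (map f [0..<length ys]))"
  unfolding coloring_avg_def by (simp only: sum_colorings_map_distinct[OF assms])

section \<open>Probabilities of equal colors\<close>

definition pair_prob :: "nat \<Rightarrow> nat \<Rightarrow> (nat \<Rightarrow> nat) \<Rightarrow> real" where
  "pair_prob n s c = coloring_avg n s c (\<lambda>f. of_bool (f 0 = f 1))"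

definition cherry_prob :: "nat \<Rightarrow> nat \<Rightarrow> (nat \<Rightarrow> nat) \<Rightarrow> real" where
  "cherry_prob n s c = coloring_avg n s c (\<lambda>f. of_bool (f 0 = f 1 \<and> f 0 = f 2))"

definition matching_prob :: "nat \<Rightarrow> nat \<Rightarrow> (nat \<Rightarrow> nat) \<Rightarrow> real" where
  "matching_prob n s c = coloring_avg n s c (\<lambda>f. of_bool (f 0 = f 1 \<and> f 2 = f 3))"

lemma coloring_avg_same_color_pair:
  assumes "u < n" "v < n" "u \<noteq> v"
  shows "coloring_avg n s c (\<lambda>f. of_bool (f u = f v)) = pair_prob n s c"
  using coloring_avg_map_distinct[of "[u,v]" n s c "\<lambda>xs. of_bool (xs!0 = xs!1)"] assms
  by (simp add: pair_prob_def upt_rec eval_nat_numeral)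

lemma coloring_avg_same_color_cherry:
  assumes "u < n" "v < n" "w < n" "distinct [u,v,w]"
  shows "coloring_avg n s c (\<lambda>f. of_bool (f u = f v \<and> f u = f w)) = cherry_prob n s c"
  using coloring_avg_map_distinct[of "[u,v,w]" n s c "\<lambda>xs. of_bool (xs!0 = xs!1 \<and> xs!0 = xs!2)"] assms
  by (simp add: cherry_prob_def upt_rec eval_nat_numeral)

lemma coloring_avg_same_color_matching:
  assumes "u < n" "v < n" "w < n" "x < n" "distinct [u,v,w,x]"
  shows "coloring_avg n s c (\<lambda>f. of_bool (f u = f v \<and> f w = f x)) = matching_prob n s c"
  using coloring_avg_map_distinct[of "[u,v,w,x]" n s c "\<lambda>xs. of_bool (xs!0 = xs!1 \<and> xs!2 = xs!3)"] assms
  by (simp add: matching_prob_def upt_rec eval_nat_numeral)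

lemma pair_prob_le_1: "is_composition n s c \<Longrightarrow> pair_prob n s c \<le> 1"
  unfolding pair_prob_def
  using coloring_avg_mono[of n s c "\<lambda>f. of_bool (f 0 = f 1)" "\<lambda>f. 1"] coloring_avg_const by simp

lemma cherry_prob_le_pair_prob: "cherry_prob n s c \<le> pair_prob n s c"
  unfolding pair_prob_def cherry_prob_def by (rule coloring_avg_mono) simp

lemma pair_prob_nonneg: "0 \<le> pair_prob n s c"
  unfolding pair_prob_def coloring_avg_def by (simp add: sum_nonneg)

text \<open>The numbers of ordered pairs and triples of distinct vertices of equal color.\<close>

definition same_color_pairs :: "nat \<Rightarrow> (nat \<Rightarrow> nat) \<Rightarrow> real" where
  "same_color_pairs s c = (\<Sum>i<s. real (c i) * (real (c i) - 1))"

definition same_color_triples :: "nat \<Rightarrow> (nat \<Rightarrow> nat) \<Rightarrow> real" where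
  "same_color_triples s c = (\<Sum>i<s. real (c i) * (real (c i) - 1) * (real (c i) - 2))"

lemma sum_le_sum_subset_add_bound:
  fixes g :: "'a \<Rightarrow> real"
  assumes "finite A" "B \<subseteq> A" "\<And>x. x \<in> A \<Longrightarrow> g x \<le> K"
  shows "sum g A \<le> sum g B + K * real (card (A - B))"
proof -
  have "sum g A = sum g B + sum g (A - B)"
    using assms(1,2) by (metis add.commute sum.subset_diff)
  moreover have "sum g (A - B) \<le> K * real (card (A - B))"
    using sum_bounded_above[of "A - B" g K] assms(3) by (auto simp: mult.commute)
  ultimately show ?thesis by simp
qed

context
  fixes n s :: nat and c f :: "nat \<Rightarrow> nat"
  assumes f: "f \<in> colorings n s c"
begin

lemma sum_same_color: "u < n \<Longrightarrow> (\<Sum>v<n. of_bool (f u = f v) :: real) = real (c (f u))"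
proof -
  assume u: "u < n"
  have "(\<Sum>v<n. of_bool (f u = f v) :: real) = real (card ({..<n} \<inter> {v. f u = f v}))"
    by simp
  also have "{..<n} \<inter> {v. f u = f v} = {w\<in>{..<n}. f w = f u}" by auto
  finally show ?thesis using coloring_class_card[OF f u] by metis
qed

lemma sum_same_color_diff1:
  "u < n \<Longrightarrow> (\<Sum>v\<in>{..<n}-{u}. of_bool (f u = f v) :: real) = real (c (f u)) - 1"
  by (subst sum_diff1) (simp_all add: sum_same_color del: sum_of_bool_eq)

lemma sum_vertices_by_color: "(\<Sum>u<n. g (f u) :: real) = (\<Sum>i<s. real (c i) * g i)"
proof -
  have "f ` {..<n} \<subseteq> {..<s}" using f by (auto simp: colorings_def)
  then have "(\<Sum>u<n. g (f u)) = (\<Sum>i<s. \<Sum>u\<in>{u\<in>{..<n}. f u = i}. g (f u))"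
    using sum.group[of "{..<n}" "{..<s}" f "\<lambda>u. g (f u)"] by simp
  also have "\<dots> = (\<Sum>i<s. real (c i) * g i)"
    using f by (intro sum.cong) (auto simp: colorings_def)
  finally show ?thesis .
qed

lemma count_same_color_pairs:
  "(\<Sum>u<n. \<Sum>v\<in>{..<n}-{u}. of_bool (f u = f v) :: real) = same_color_pairs s c"
  using sum_vertices_by_color[of "\<lambda>i. real (c i) - 1"]
  by (simp add: sum_same_color_diff1 same_color_pairs_def del: sum_of_bool_eq)

lemma count_same_color_triples:
  "(\<Sum>u<n. \<Sum>v\<in>{..<n}-{u}. \<Sum>w\<in>{..<n}-{u,v}. of_bool (f u = f v \<and> f u = f w) :: real)
     = same_color_triples s c"
proof -
  have "(\<Sum>w\<in>{..<n}-{u,v}. of_bool (f u = f v \<and> f u = f w) :: real)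
        = of_bool (f u = f v) * (real (c (f u)) - 2)" if "u < n" "v \<in> {..<n}-{u}" for u v
  proof (cases "f u = f v")
    case True
    have "{..<n}-{u,v} = ({..<n}-{u})-{v}" by auto
    then show ?thesis using True that by (simp add: sum_diff1 sum_same_color sum_same_color_diff1 del: sum_of_bool_eq)
  qed simp
  then have "(\<Sum>u<n. \<Sum>v\<in>{..<n}-{u}. \<Sum>w\<in>{..<n}-{u,v}. of_bool (f u = f v \<and> f u = f w) :: real)
     = (\<Sum>u<n. (real (c (f u)) - 1) * (real (c (f u)) - 2))"
    by (simp add: sum_distrib_right[symmetric] sum_same_color_diff1 del: sum_of_bool_eq)
  also have "\<dots> = same_color_triples s c"
    using sum_vertices_by_color[of "\<lambda>i. (real (c i) - 1) * (real (c i) - 2)"]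
    by (simp add: same_color_triples_def mult.assoc)
  finally show ?thesis .
qed

text \<open>Removing two vertices destroys at most 4n ordered same-color pairs.\<close>

lemma count_same_color_pairs_avoiding:
  fixes u v :: nat
  defines "T \<equiv> (\<Sum>w\<in>{..<n}-{u,v}. \<Sum>x\<in>{..<n}-{u,v,w}. of_bool (f w = f x) :: real)"
  shows "same_color_pairs s c - 4 * real n \<le> T" "T \<le> same_color_pairs s c"
proof -
  define F where "F w = (\<Sum>x\<in>{..<n}-{w}. of_bool (f w = f x) :: real)" for w
  have sumF: "(\<Sum>w<n. F w) = same_color_pairs s c"
    using count_same_color_pairs by (simp add: F_def)
  have F_nonneg: "0 \<le> F w" for w by (simp add: F_def sum_nonneg)
  have F_le: "F w \<le> real n" for w
  proof -
    have "F w \<le> (\<Sum>x\<in>{..<n}-{w}. 1)" unfolding F_def by (intro sum_mono) auto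
    then show ?thesis using card_Diff1_le[of "{..<n}" w] by simp
  qed
  have "T \<le> (\<Sum>w\<in>{..<n}-{u,v}. F w)"
    unfolding T_def F_def by (intro sum_mono sum_mono2) auto
  also have "\<dots> \<le> (\<Sum>w<n. F w)" by (intro sum_mono2) (auto simp: F_nonneg)
  finally show "T \<le> same_color_pairs s c" using sumF by simp
  have inner: "F w - 2 \<le> (\<Sum>x\<in>{..<n}-{u,v,w}. of_bool (f w = f x) :: real)" for w
  proof -
    have "F w \<le> (\<Sum>x\<in>{..<n}-{u,v,w}. of_bool (f w = f x)) + 1 * real (card (({..<n}-{w}) - ({..<n}-{u,v,w})))"
      unfolding F_def by (rule sum_le_sum_subset_add_bound) auto
    moreover have "card (({..<n}-{w}) - ({..<n}-{u,v,w})) \<le> card {u, v}"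
      by (intro card_mono) auto
    moreover have "card {u, v} \<le> 2" by (simp add: card_insert_le_m1)
    ultimately show ?thesis by linarith
  qed
  have "card ({..<n} - ({..<n}-{u,v})) \<le> card {u, v}" by (intro card_mono) auto
  also have "card {u, v} \<le> 2" by (simp add: card_insert_le_m1)
  finally have "real n * real (card ({..<n} - ({..<n}-{u,v}))) \<le> real n * 2"
    by (intro mult_left_mono) auto
  moreover have "(\<Sum>w<n. F w) \<le> (\<Sum>w\<in>{..<n}-{u,v}. F w) + real n * real (card ({..<n} - ({..<n}-{u,v})))"
    by (rule sum_le_sum_subset_add_bound) (auto simp: F_le)
  moreover have "card ({..<n}-{u,v}) \<le> n" by (metis card_lessThan card_mono Diff_subset finite_lessThan)
  moreover have "(\<Sum>w\<in>{..<n}-{u,v}. F w) - 2 * real (card ({..<n}-{u,v})) \<le> T"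
    using sum_mono[of "{..<n}-{u,v}" "\<lambda>w. F w - 2", OF inner] by (simp add: sum_subtractf T_def)
  ultimately show "same_color_pairs s c - 4 * real n \<le> T"
    using sumF by linarith
qed

lemma count_same_color_matchings:
  defines "S \<equiv> (\<Sum>u<n. \<Sum>v\<in>{..<n}-{u}. \<Sum>w\<in>{..<n}-{u,v}. \<Sum>x\<in>{..<n}-{u,v,w}.
       of_bool (f u = f v \<and> f w = f x) :: real)"
  shows "same_color_pairs s c * (same_color_pairs s c - 4 * real n) \<le> S"
    and "S \<le> same_color_pairs s c ^ 2"
proof -
  define T where "T u v = (\<Sum>w\<in>{..<n}-{u,v}. \<Sum>x\<in>{..<n}-{u,v,w}. of_bool (f w = f x) :: real)" for u v
  have S: "S = (\<Sum>u<n. \<Sum>v\<in>{..<n}-{u}. of_bool (f u = f v) * T u v)"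
    unfolding S_def T_def by (simp only: of_bool_conj sum_distrib_left)
  have "(\<Sum>u<n. \<Sum>v\<in>{..<n}-{u}. of_bool (f u = f v) * (same_color_pairs s c - 4 * real n)) \<le> S"
    unfolding S T_def by (intro sum_mono mult_left_mono count_same_color_pairs_avoiding) auto
  then show "same_color_pairs s c * (same_color_pairs s c - 4 * real n) \<le> S"
    using count_same_color_pairs by (simp add: sum_distrib_right[symmetric])
  have "S \<le> (\<Sum>u<n. \<Sum>v\<in>{..<n}-{u}. of_bool (f u = f v) * same_color_pairs s c)"
    unfolding S T_def by (intro sum_mono mult_left_mono count_same_color_pairs_avoiding) auto
  then show "S \<le> same_color_pairs s c ^ 2"
    using count_same_color_pairs by (simp add: sum_distrib_right[symmetric] power2_eq_square)
qed

end

lemma real_card_lessThan_diff: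
  "X \<subseteq> {..<n} \<Longrightarrow> real (card ({..<n} - X)) = real n - real (card X)"
  by (metis card_Diff_subset card_lessThan card_mono finite_lessThan finite_subset of_nat_diff)

context
  fixes n s :: nat and c :: "nat \<Rightarrow> nat"
  assumes comp: "is_composition n s c"
begin

lemma pair_prob_eq: "pair_prob n s c * (real n * (real n - 1)) = same_color_pairs s c"
proof -
  have "same_color_pairs s c = coloring_avg n s c (\<lambda>f. \<Sum>u<n. \<Sum>v\<in>{..<n}-{u}. of_bool (f u = f v))"
    using coloring_avg_cong[OF count_same_color_pairs, of n s c] coloring_avg_const[OF comp] by simp
  also have "\<dots> = (\<Sum>u<n. \<Sum>v\<in>{..<n}-{u}. pair_prob n s c)"
    by (simp add: coloring_avg_sum coloring_avg_same_color_pair del: sum_of_bool_eq)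
  finally show ?thesis by (simp add: real_card_lessThan_diff algebra_simps)
qed

lemma cherry_prob_eq:
  "cherry_prob n s c * (real n * (real n - 1) * (real n - 2)) = same_color_triples s c"
proof -
  have "same_color_triples s c = coloring_avg n s c
      (\<lambda>f. \<Sum>u<n. \<Sum>v\<in>{..<n}-{u}. \<Sum>w\<in>{..<n}-{u,v}. of_bool (f u = f v \<and> f u = f w))"
    using coloring_avg_cong[OF count_same_color_triples, of n s c] coloring_avg_const[OF comp] by simp
  also have "\<dots> = (\<Sum>u<n. \<Sum>v\<in>{..<n}-{u}. \<Sum>w\<in>{..<n}-{u,v}. cherry_prob n s c)"
    by (simp add: coloring_avg_sum coloring_avg_same_color_cherry del: sum_of_bool_eq)
  finally show ?thesis by (simp add: real_card_lessThan_diff algebra_simps)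
qed

lemma matching_prob_bounds:
  defines "N \<equiv> real n * (real n - 1) * (real n - 2) * (real n - 3)"
  shows "same_color_pairs s c * (same_color_pairs s c - 4 * real n) \<le> matching_prob n s c * N"
    and "matching_prob n s c * N \<le> same_color_pairs s c ^ 2"
proof -
  define S where "S f = (\<Sum>u<n. \<Sum>v\<in>{..<n}-{u}. \<Sum>w\<in>{..<n}-{u,v}. \<Sum>x\<in>{..<n}-{u,v,w}.
       of_bool (f u = f v \<and> f w = f x) :: real)" for f :: "nat \<Rightarrow> nat"
  have "coloring_avg n s c S
      = (\<Sum>u<n. \<Sum>v\<in>{..<n}-{u}. \<Sum>w\<in>{..<n}-{u,v}. \<Sum>x\<in>{..<n}-{u,v,w}. matching_prob n s c)"
    unfolding S_def by (simp add: coloring_avg_sum coloring_avg_same_color_matching del: sum_of_bool_eq)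
  also have "\<dots> = matching_prob n s c * N"
    by (simp add: real_card_lessThan_diff N_def algebra_simps)
  finally have avg_S: "coloring_avg n s c S = matching_prob n s c * N" .
  have "coloring_avg n s c (\<lambda>_. same_color_pairs s c * (same_color_pairs s c - 4 * real n))
      \<le> coloring_avg n s c S"
    unfolding S_def by (rule coloring_avg_mono) (rule count_same_color_matchings(1))
  then show "same_color_pairs s c * (same_color_pairs s c - 4 * real n) \<le> matching_prob n s c * N"
    by (simp add: avg_S coloring_avg_const[OF comp])
  have "coloring_avg n s c S \<le> coloring_avg n s c (\<lambda>_. same_color_pairs s c ^ 2)"
    unfolding S_def by (rule coloring_avg_mono) (rule count_same_color_matchings(2))
  then show "matching_prob n s c * N \<le> same_color_pairs s c ^ 2"
    by (simp add: avg_S coloring_avg_const[OF comp])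
qed

end

text \<open>The right-hand side is the sum of the q i (q i - S)^2, where S is the sum of the q i^2;
  and the sum of the (q i - S)^2 is smallest for S equal to the mean 1/s.\<close>

lemma weighted_variance_ge:
  fixes q :: "nat \<Rightarrow> real"
  assumes sum_q: "(\<Sum>i<s. q i) = 1" and q_ge: "\<forall>i<s. \<delta> \<le> q i" and "0 \<le> \<delta>"
  shows "\<delta> * (\<Sum>i<s. (q i - 1 / real s)^2) \<le> (\<Sum>i<s. q i ^ 3) - (\<Sum>i<s. q i ^ 2)^2"
proof -
  define S where "S = (\<Sum>i<s. q i ^ 2)"
  have "s > 0" using sum_q by (cases s) auto
  have variance: "(\<Sum>i<s. q i * (q i - S)^2) = (\<Sum>i<s. q i ^ 3) - S^2"
  proof -
    have "(\<Sum>i<s. q i * (q i - S)^2) = (\<Sum>i<s. q i ^ 3 - 2 * S * q i ^ 2 + S^2 * q i)"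
      by (intro sum.cong refl) (simp add: power2_eq_square power3_eq_cube algebra_simps)
    also have "\<dots> = (\<Sum>i<s. q i ^ 3) - 2 * S * S + S^2"
      by (simp add: sum.distrib sum_subtractf sum_distrib_left[symmetric] S_def sum_q)
    finally show ?thesis by (simp add: power2_eq_square)
  qed
  have "(\<Sum>i<s. (q i - S)^2) = (\<Sum>i<s. (q i - 1 / real s)^2
      + 2 * (1 / real s - S) * (q i - 1 / real s) + (1 / real s - S)^2)"
    by (intro sum.cong refl) (simp add: power2_eq_square algebra_simps)
  also have "\<dots> = (\<Sum>i<s. (q i - 1 / real s)^2) + 2 * (1 / real s - S) * (\<Sum>i<s. q i - 1 / real s)
      + real s * (1 / real s - S)^2"
    by (simp add: sum.distrib sum_distrib_left)
  finally have "(\<Sum>i<s. (q i - S)^2) = (\<Sum>i<s. (q i - 1 / real s)^2)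
      + 2 * (1 / real s - S) * (\<Sum>i<s. q i - 1 / real s) + real s * (1 / real s - S)^2" .
  moreover have "(\<Sum>i<s. q i - 1 / real s) = 0" using sum_q \<open>s > 0\<close> by (simp add: sum_subtractf)
  ultimately have "(\<Sum>i<s. (q i - 1 / real s)^2) \<le> (\<Sum>i<s. (q i - S)^2)" by simp
  then have "\<delta> * (\<Sum>i<s. (q i - 1 / real s)^2) \<le> (\<Sum>i<s. \<delta> * (q i - S)^2)"
    using \<open>0 \<le> \<delta>\<close> by (simp add: sum_distrib_left[symmetric] mult_left_mono)
  also have "\<dots> \<le> (\<Sum>i<s. q i * (q i - S)^2)"
    using q_ge by (intro sum_mono mult_right_mono) auto
  finally show ?thesis using variance by (simp add: S_def)
qed

text \<open>The deviations above and below are at most x^2 (N - D) / (N^2 D) and k (x / N) / D,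
  and x / N \<le> 1.\<close>

lemma abs_diff_square_ratio_le:
  fixes x N D k m :: real
  assumes "0 \<le> x" "x \<le> N" "0 < D" "D \<le> N" "N - D \<le> k"
    and lower: "x * (x - k) \<le> m * (N * D)" and upper: "m * (N * D) \<le> x * x"
  shows "\<bar>m - (x / N)^2\<bar> \<le> k / D"
proof -
  have "0 < N" "0 < N * D" using assms(3,4) by simp_all
  have gap: "x * x * (N - D) / (N * N * D) \<le> (N - D) / D"
  proof -
    have "x * x * (N - D) / (N * N * D) \<le> N * N * (N - D) / (N * N * D)"
      using assms(1-4) by (intro divide_right_mono mult_right_mono mult_mono) auto
    then show ?thesis using \<open>0 < N\<close> by simp
  qed
  have "m - (x / N)^2 \<le> x * x / (N * D) - (x / N)^2"
    using upper \<open>0 < N * D\<close> by (simp add: pos_le_divide_eq)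
  also have "\<dots> = x * x * (N - D) / (N * N * D)"
    using \<open>0 < N\<close> assms(3) by (simp add: field_simps power2_eq_square)
  also have "\<dots> \<le> k / D" using gap assms(3,5) divide_right_mono[of "N - D" k D] by linarith
  finally have up: "m - (x / N)^2 \<le> k / D" .
  have "x * (x - k) / (N * D) - (x / N)^2 = x * x * (N - D) / (N * N * D) - k * (x / N) / D"
    using \<open>0 < N\<close> assms(3) by (simp add: field_simps power2_eq_square)
  moreover have "x * (x - k) / (N * D) \<le> m" using lower \<open>0 < N * D\<close> by (simp add: pos_divide_le_eq)
  moreover have "0 \<le> x * x * (N - D) / (N * N * D)" using assms(1,3,4) by simp
  moreover have "k * (x / N) / D \<le> k * 1 / D"
    using assms \<open>0 < N\<close> by (intro divide_right_mono mult_left_mono) auto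
  ultimately have "- (k / D) \<le> m - (x / N)^2" by linarith
  with up show ?thesis by (simp add: abs_le_iff)
qed

context
  fixes n s :: nat and c :: "nat \<Rightarrow> nat"
  assumes comp: "is_composition n s c"
begin

lemma sum_class_sizes: "(\<Sum>i<s. real (c i)) = real n"
  using comp unfolding is_composition_def by (metis of_nat_sum)

lemma class_size_le: "i < s \<Longrightarrow> c i \<le> n"
  using comp unfolding is_composition_def by (metis finite_lessThan lessThan_iff member_le_sum zero_le)

lemma same_color_pairs_eq_sum_squares: "same_color_pairs s c = (\<Sum>i<s. real (c i) ^ 2) - real n"
  unfolding same_color_pairs_def using sum_class_sizes
  by (simp add: power2_eq_square algebra_simps sum_subtractf)

lemma same_color_pairs_nonneg: "0 \<le> same_color_pairs s c"
proof -
  have "0 \<le> real k * (real k - 1)" for k :: nat by (cases k) auto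
  then show ?thesis unfolding same_color_pairs_def by (intro sum_nonneg) auto
qed

lemma same_color_pairs_le: "same_color_pairs s c \<le> real n * (real n - 1)"
proof -
  have "same_color_pairs s c \<le> (\<Sum>i<s. real (c i) * (real n - 1))"
    unfolding same_color_pairs_def using class_size_le by (intro sum_mono mult_left_mono) auto
  also have "\<dots> = real n * (real n - 1)" using sum_class_sizes by (simp add: sum_distrib_right[symmetric])
  finally show ?thesis .
qed

lemma sum_class_sizes_squared_le: "(\<Sum>i<s. real (c i) ^ 2) \<le> real n ^ 2"
proof -
  have "(\<Sum>i<s. real (c i) ^ 2) \<le> (\<Sum>i<s. real (c i) * real n)"
    using class_size_le by (intro sum_mono) (auto simp: power2_eq_square intro!: mult_left_mono)
  also have "\<dots> = real n ^ 2" using sum_class_sizes by (simp add: sum_distrib_right[symmetric] power2_eq_square)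
  finally show ?thesis .
qed

lemma same_color_triples_nonneg: "0 \<le> same_color_triples s c"
proof -
  have "0 \<le> real k * (real k - 1) * (real k - 2)" for k :: nat
    by (cases "k \<le> 2") (auto simp: le_Suc_eq numeral_2_eq_2)
  then show ?thesis unfolding same_color_triples_def by (intro sum_nonneg) auto
qed

lemma same_color_triples_ge:
  "(\<Sum>i<s. real (c i) ^ 3) - 3 * (\<Sum>i<s. real (c i) ^ 2) \<le> same_color_triples s c"
proof -
  have "real k ^ 3 - 3 * real k ^ 2 \<le> real k * (real k - 1) * (real k - 2)" for k :: nat
    by (simp add: power2_eq_square power3_eq_cube algebra_simps)
  then have "(\<Sum>i<s. real (c i) ^ 3 - 3 * real (c i) ^ 2) \<le> same_color_triples s c"
    unfolding same_color_triples_def by (intro sum_mono) auto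
  then show ?thesis by (simp add: sum_subtractf sum_distrib_left)
qed

lemma pair_prob_eq_divide: "2 \<le> n \<Longrightarrow> pair_prob n s c = same_color_pairs s c / (real n * (real n - 1))"
  using pair_prob_eq[OF comp] by (simp add: eq_divide_eq)

lemma cherry_prob_eq_divide:
  "3 \<le> n \<Longrightarrow> cherry_prob n s c = same_color_triples s c / (real n * (real n - 1) * (real n - 2))"
  using cherry_prob_eq[OF comp] by (simp add: eq_divide_eq)

lemma pair_prob_ge:
  assumes "2 \<le> n" and class_ge: "\<forall>i<s. \<delta> \<le> real (c i) / real n"
  shows "\<delta> - 1 / real n \<le> pair_prob n s c"
proof -
  have n: "real n > 0" using assms(1) by simp
  have "(\<Sum>i<s. \<delta> * real n * real (c i)) \<le> (\<Sum>i<s. real (c i) ^ 2)"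
  proof (intro sum_mono)
    fix i assume "i \<in> {..<s}"
    then have "\<delta> * real n \<le> real (c i)" using class_ge n by (auto simp: field_simps)
    then show "\<delta> * real n * real (c i) \<le> real (c i) ^ 2" by (simp add: power2_eq_square mult_right_mono)
  qed
  then have "\<delta> * real n * real n - real n \<le> same_color_pairs s c"
    using sum_class_sizes by (simp add: same_color_pairs_eq_sum_squares sum_distrib_left[symmetric])
  moreover have "\<delta> - 1 / real n = (\<delta> * real n * real n - real n) / (real n * real n)"
    using n by (simp add: field_simps)
  ultimately have "\<delta> - 1 / real n \<le> same_color_pairs s c / (real n * real n)"
    by (simp add: divide_right_mono)
  also have "\<dots> \<le> same_color_pairs s c / (real n * (real n - 1))"
    using same_color_pairs_nonneg assms(1) by (intro divide_left_mono) auto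
  finally show ?thesis using pair_prob_eq_divide assms(1) by simp
qed

lemma pair_prob_le_sum_squares:
  assumes "2 \<le> n"
  shows "pair_prob n s c \<le> (\<Sum>i<s. real (c i) ^ 2) / real n ^ 2"
proof -
  define X where "X = (\<Sum>i<s. real (c i) ^ 2)"
  have "(X - real n) * real n ^ 2 - X * (real n * (real n - 1)) = real n * (X - real n ^ 2)"
    by (simp add: power2_eq_square algebra_simps)
  also have "\<dots> \<le> 0" using sum_class_sizes_squared_le by (simp add: X_def mult_nonneg_nonpos)
  finally have "(X - real n) / (real n * (real n - 1)) \<le> X / real n ^ 2"
    using assms by (simp add: divide_simps)
  then show ?thesis
    using pair_prob_eq_divide[OF assms] by (simp add: same_color_pairs_eq_sum_squares X_def)
qed

lemma cherry_prob_ge: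
  assumes "3 \<le> n"
  shows "(\<Sum>i<s. real (c i) ^ 3) / real n ^ 3 - 3 / real n \<le> cherry_prob n s c"
proof -
  have n: "real n > 0" using assms by simp
  have "(\<Sum>i<s. real (c i) ^ 3) / real n ^ 3 - 3 / real n
      = ((\<Sum>i<s. real (c i) ^ 3) - 3 * real n ^ 2) / real n ^ 3"
    using n by (simp add: field_simps power2_eq_square power3_eq_cube)
  also have "\<dots> \<le> same_color_triples s c / real n ^ 3"
    using same_color_triples_ge sum_class_sizes_squared_le by (intro divide_right_mono) auto
  also have "\<dots> \<le> same_color_triples s c / (real n * (real n - 1) * (real n - 2))"
  proof (intro divide_left_mono)
    show "real n * (real n - 1) * (real n - 2) \<le> real n ^ 3"
      using assms by (simp add: power3_eq_cube algebra_simps)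
    show "0 < real n ^ 3 * (real n * (real n - 1) * (real n - 2))" using assms by simp
  qed (rule same_color_triples_nonneg)
  finally show ?thesis using cherry_prob_eq_divide[OF assms] by simp
qed

lemma cherry_prob_sub_pair_prob_sq_ge:
  assumes "3 \<le> n" and class_ge: "\<forall>i<s. \<delta> \<le> real (c i) / real n" and "0 \<le> \<delta>"
  shows "\<delta> * (\<Sum>i<s. (real (c i) / real n - 1 / real s)^2) - 3 / real n
    \<le> cherry_prob n s c - pair_prob n s c ^ 2"
proof -
  define q where "q i = real (c i) / real n" for i
  have "(\<Sum>i<s. q i) = 1"
    using sum_class_sizes assms(1) by (simp add: q_def sum_divide_distrib[symmetric])
  then have "\<delta> * (\<Sum>i<s. (q i - 1 / real s)^2) \<le> (\<Sum>i<s. q i ^ 3) - (\<Sum>i<s. q i ^ 2)^2"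
    using weighted_variance_ge class_ge \<open>0 \<le> \<delta>\<close> by (simp add: q_def)
  moreover have "pair_prob n s c ^ 2 \<le> (\<Sum>i<s. q i ^ 2)^2"
    using pair_prob_le_sum_squares pair_prob_nonneg assms(1)
    by (intro power_mono) (auto simp: q_def power_divide sum_divide_distrib)
  moreover have "(\<Sum>i<s. q i ^ 3) - 3 / real n \<le> cherry_prob n s c"
    using cherry_prob_ge[OF assms(1)] by (simp add: q_def power_divide sum_divide_distrib)
  ultimately show ?thesis by (simp add: q_def)
qed

lemma matching_prob_close_to_pair_prob_sq:
  assumes "6 \<le> n"
  shows "\<bar>matching_prob n s c - pair_prob n s c ^ 2\<bar> \<le> 16 / real n"
proof -
  define x where "x = same_color_pairs s c"
  define N where "N = real n * (real n - 1)"
  define D where "D = (real n - 2) * (real n - 3)"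
  have "0 < real n - 2" "0 < real n - 3" using assms by linarith+
  then have "0 < D" unfolding D_def by (rule mult_pos_pos)
  have "D \<le> N" "N - D \<le> 4 * real n" using assms by (simp_all add: D_def N_def algebra_simps)
  have "0 \<le> x" "x \<le> N" using same_color_pairs_nonneg same_color_pairs_le by (simp_all add: x_def N_def)
  have "x * (x - 4 * real n) \<le> matching_prob n s c * (N * D)" "matching_prob n s c * (N * D) \<le> x * x"
    using matching_prob_bounds[OF comp] by (simp_all add: x_def N_def D_def mult.assoc power2_eq_square)
  with \<open>0 \<le> x\<close> \<open>x \<le> N\<close> \<open>0 < D\<close> \<open>D \<le> N\<close> \<open>N - D \<le> 4 * real n\<close>
  have dev: "\<bar>matching_prob n s c - (x / N)^2\<bar> \<le> 4 * real n / D" by (rule abs_diff_square_ratio_le)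
  have "16 * D - 4 * real n * real n = 4 * ((real n - 6) * (3 * real n - 2) + 12)"
    by (simp add: D_def algebra_simps)
  also have "\<dots> \<ge> 0" using assms by simp
  finally have "4 * real n / D \<le> 16 / real n" using \<open>0 < D\<close> assms by (simp add: field_simps)
  moreover have "pair_prob n s c = x / N" using pair_prob_eq_divide assms by (simp add: x_def N_def)
  ultimately show ?thesis using dev by simp
qed

end

section \<open>Monochromatic edges of a fixed graph\<close>

definition edges :: "nat \<Rightarrow> nat set set" where
  "edges n = {e. \<exists>u v. u < n \<and> v < n \<and> u \<noteq> v \<and> e = {u, v}}"

lemma simple_graphs_eq_Pow_edges: "simple_graphs n = Pow (edges n)"
  by (auto simp: simple_graphs_def edges_def)

lemma finite_edges: "finite (edges n)"
  by (rule finite_subset[of _ "(\<lambda>(u, v). {u, v}) ` ({..<n} \<times> {..<n})"]) (auto simp: edges_def)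

lemma finite_simple_graphs: "finite (simple_graphs n)"
  by (simp add: simple_graphs_eq_Pow_edges finite_edges)

lemma finite_simple_graph: "E \<in> simple_graphs n \<Longrightarrow> finite E"
  using finite_simple_graphs finite_edges by (auto simp: simple_graphs_eq_Pow_edges intro: finite_subset)

lemma card_edge: "e \<in> edges n \<Longrightarrow> card e = 2"
  by (auto simp: edges_def)

lemma edge_subset: "e \<in> edges n \<Longrightarrow> e \<subseteq> {..<n}"
  by (auto simp: edges_def)

lemma edge_through_vertex: "e \<in> edges n \<Longrightarrow> x \<in> e \<Longrightarrow> \<exists>y<n. x < n \<and> y \<noteq> x \<and> e = {x, y}"
  by (auto simp: edges_def insert_commute)

lemma card_Int_edges_le_1:
  assumes "e \<in> edges n" "e' \<in> edges n" "e \<noteq> e'"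
  shows "card (e \<inter> e') \<le> 1"
proof (rule ccontr)
  have fin: "finite e" "finite e'" using assms by (auto simp: edges_def)
  assume "\<not> card (e \<inter> e') \<le> 1"
  moreover have "card (e \<inter> e') \<le> card e" "card (e \<inter> e') \<le> card e'"
    using fin by (auto intro: card_mono)
  ultimately have "card (e \<inter> e') = card e" "card (e \<inter> e') = card e'"
    using card_edge assms by (metis Suc_1 le_antisym not_less_eq_eq)+
  then have "e \<inter> e' = e" "e \<inter> e' = e'"
    using card_subset_eq[of e "e \<inter> e'"] card_subset_eq[of e' "e \<inter> e'"] fin by auto
  then show False using assms(3) by simp
qed

lemma Sigma2_eq_sum_card_Int:
  assumes "E \<subseteq> edges n"
  shows "Sigma2 n E = (\<Sum>e\<in>E. \<Sum>e'\<in>E. real (card (e \<inter> e')))"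
proof -
  have E: "finite E" using assms finite_edges by (rule finite_subset)
  have "real (degree E v) = (\<Sum>e\<in>E. of_bool (v \<in> e))" for v
    using E by (simp add: degree_def Int_def)
  then have "Sigma2 n E = (\<Sum>v<n. \<Sum>e\<in>E. \<Sum>e'\<in>E. of_bool (v \<in> e) * of_bool (v \<in> e'))"
    unfolding Sigma2_def by (simp add: power2_eq_square sum_product del: sum_of_bool_eq)
  also have "\<dots> = (\<Sum>e\<in>E. \<Sum>e'\<in>E. \<Sum>v<n. of_bool (v \<in> e) * of_bool (v \<in> e'))"
    by (subst sum.swap) (simp add: sum.swap[of _ "{..<n}"] del: sum_of_bool_eq)
  also have "\<dots> = (\<Sum>e\<in>E. \<Sum>e'\<in>E. real (card (e \<inter> e')))"
  proof (intro sum.cong refl)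
    fix e e' assume "e \<in> E"
    then have "{..<n} \<inter> {v. v \<in> e \<inter> e'} = e \<inter> e'" using assms edge_subset by auto
    moreover have "(\<Sum>v<n. of_bool (v \<in> e) * of_bool (v \<in> e') :: real) = (\<Sum>v<n. of_bool (v \<in> e \<inter> e'))"
      by (intro sum.cong) auto
    ultimately show "(\<Sum>v<n. of_bool (v \<in> e) * of_bool (v \<in> e') :: real) = real (card (e \<inter> e'))"
      by simp
  qed
  finally show ?thesis .
qed

lemma Sigma2_nonneg: "0 \<le> Sigma2 n E"
  by (simp add: Sigma2_def sum_nonneg)

lemma Sigma2_empty [simp]: "Sigma2 n {} = 0"
  by (simp add: Sigma2_def degree_def)

lemma Sigma2_le: "E \<subseteq> edges n \<Longrightarrow> Sigma2 n E \<le> 2 * num_edges E ^ 2"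
proof -
  assume E: "E \<subseteq> edges n"
  have "real (card (e \<inter> e')) \<le> 2" if "e \<in> E" for e e'
  proof -
    have "e \<in> edges n" using that E by auto
    moreover from this have "card (e \<inter> e') \<le> card e" by (intro card_mono) (auto simp: edges_def)
    ultimately show ?thesis using card_edge by fastforce
  qed
  then have "Sigma2 n E \<le> (\<Sum>e\<in>E. \<Sum>e'\<in>E. 2)"
    unfolding Sigma2_eq_sum_card_Int[OF E] by (intro sum_mono) auto
  then show ?thesis by (simp add: num_edges_def power2_eq_square)
qed

definition mono_edge :: "nat set \<Rightarrow> (nat \<Rightarrow> nat) \<Rightarrow> real" where
  "mono_edge e f = of_bool (\<exists>u v. e = {u, v} \<and> f u = f v)"

lemma mono_edge_doubleton: "u \<noteq> v \<Longrightarrow> mono_edge {u, v} f = of_bool (f u = f v)"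
  unfolding mono_edge_def by (auto simp: doubleton_eq_iff)

lemma mono_edges_eq_sum: "finite E \<Longrightarrow> mono_edges E f = (\<Sum>e\<in>E. mono_edge e f)"
  unfolding mono_edges_def mono_edge_def by (simp add: Int_def)

lemma mono_edges_le_num_edges: "finite E \<Longrightarrow> mono_edges E f \<le> num_edges E"
  unfolding mono_edges_def num_edges_def by (auto intro: card_mono)

context
  fixes n s :: nat and c :: "nat \<Rightarrow> nat"
  assumes comp: "is_composition n s c"
begin

lemma coloring_avg_mono_edge: "e \<in> edges n \<Longrightarrow> coloring_avg n s c (mono_edge e) = pair_prob n s c"
  by (auto simp: edges_def mono_edge_doubleton coloring_avg_same_color_pair cong: coloring_avg_cong)

lemma coloring_avg_mono_edges:
  "E \<subseteq> edges n \<Longrightarrow> coloring_avg n s c (mono_edges E) = pair_prob n s c * num_edges E"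
  using finite_subset[OF _ finite_edges]
  by (auto simp: mono_edges_eq_sum coloring_avg_sum coloring_avg_mono_edge num_edges_def subset_iff
      cong: coloring_avg_cong)

lemma coloring_avg_mono_edge_product:
  assumes e: "e \<in> edges n" and e': "e' \<in> edges n"
  shows "coloring_avg n s c (\<lambda>f. mono_edge e f * mono_edge e' f) =
    (if e = e' then pair_prob n s c else if card (e \<inter> e') = 1 then cherry_prob n s c
     else matching_prob n s c)"
proof -
  have "card (e \<inter> e') = 0 \<or> card (e \<inter> e') = 1" if "e \<noteq> e'"
    using card_Int_edges_le_1[OF e e' that] by linarith
  moreover have "finite (e \<inter> e')" using e by (auto simp: edges_def)
  ultimately consider "e = e'" | "e \<noteq> e'" "card (e \<inter> e') = 1" | "e \<noteq> e'" "e \<inter> e' = {}"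
    by (metis card_0_eq)
  then show ?thesis
  proof cases
    case 1
    then have "(\<lambda>f. mono_edge e f * mono_edge e' f) = mono_edge e" by (auto simp: mono_edge_def fun_eq_iff)
    then show ?thesis using 1 coloring_avg_mono_edge[OF e] by simp
  next
    case 2
    then obtain x where "x \<in> e" "x \<in> e'" by (metis card_1_singletonE insertI1 Int_iff)
    with e e' obtain y z where "x < n" "y < n" "z < n" "y \<noteq> x" "z \<noteq> x" "e = {x, y}" "e' = {x, z}"
      by (metis edge_through_vertex)
    moreover from this have "y \<noteq> z" using \<open>e \<noteq> e'\<close> by auto
    ultimately show ?thesis
      using 2 coloring_avg_same_color_cherry[of x n y z s c]
      by (auto simp: mono_edge_doubleton of_bool_conj intro!: coloring_avg_cong)
  next
    case 3
    obtain a b a' b' where "a < n" "b < n" "a \<noteq> b" "e = {a, b}" "a' < n" "b' < n" "a' \<noteq> b'" "e' = {a', b'}"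
      using e e' by (auto simp: edges_def)
    moreover from this have "distinct [a, b, a', b']" using 3 by auto
    ultimately show ?thesis
      using 3 coloring_avg_same_color_matching[of a n b a' b' s c]
      by (auto simp: mono_edge_doubleton of_bool_conj intro!: coloring_avg_cong)
  qed
qed

lemma mono_edge_covariance_bounds:
  assumes e: "e \<in> edges n" and e': "e' \<in> edges n" and "6 \<le> n"
    and "0 \<le> \<kappa>" and \<kappa>: "\<kappa> \<le> cherry_prob n s c - pair_prob n s c ^ 2"
  defines "cov \<equiv> coloring_avg n s c (\<lambda>f. mono_edge e f * mono_edge e' f) - pair_prob n s c ^ 2"
  shows "\<kappa> / 2 * real (card (e \<inter> e')) - 16 / real n \<le> cov"
    and "cov \<le> real (card (e \<inter> e')) + 16 / real n"
proof -
  let ?p = "pair_prob n s c"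
  have "?p \<le> 1" "cherry_prob n s c \<le> ?p" "0 \<le> 16 / real n" "0 \<le> ?p ^ 2"
    using pair_prob_le_1[OF comp] cherry_prob_le_pair_prob by auto
  have "\<kappa> / 2 * real (card (e \<inter> e')) - 16 / real n \<le> cov
      \<and> cov \<le> real (card (e \<inter> e')) + 16 / real n"
  proof (cases "e = e'")
    case True
    have "\<kappa> - 16 / real n \<le> ?p - ?p ^ 2" "?p - ?p ^ 2 \<le> 2 + 16 / real n"
      using \<kappa> \<open>?p \<le> 1\<close> \<open>cherry_prob n s c \<le> ?p\<close> \<open>0 \<le> 16 / real n\<close> \<open>0 \<le> ?p ^ 2\<close>
      by linarith+
    then show ?thesis unfolding cov_def coloring_avg_mono_edge_product[OF e e']
      using True card_edge[OF e'] by simp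
  next
    case False
    show ?thesis
    proof (cases "card (e \<inter> e') = 1")
      case True
      have "\<kappa> / 2 - 16 / real n \<le> cherry_prob n s c - ?p ^ 2"
        "cherry_prob n s c - ?p ^ 2 \<le> 1 + 16 / real n"
        using \<kappa> \<open>0 \<le> \<kappa>\<close> \<open>?p \<le> 1\<close> \<open>cherry_prob n s c \<le> ?p\<close> \<open>0 \<le> 16 / real n\<close>
          \<open>0 \<le> ?p ^ 2\<close> by linarith+
      then show ?thesis unfolding cov_def coloring_avg_mono_edge_product[OF e e']
        using False True by simp
    next
      case False2: False
      then have "card (e \<inter> e') = 0" using card_Int_edges_le_1[OF e e' False] by linarith
      then show ?thesis unfolding cov_def coloring_avg_mono_edge_product[OF e e']
        using False False2 matching_prob_close_to_pair_prob_sq[OF comp \<open>6 \<le> n\<close>]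
        by (simp add: abs_le_iff)
    qed
  qed
  then show "\<kappa> / 2 * real (card (e \<inter> e')) - 16 / real n \<le> cov"
    and "cov \<le> real (card (e \<inter> e')) + 16 / real n" by auto
qed

lemma coloring_avg_sq_dev_mono_edges:
  assumes E: "E \<subseteq> edges n"
  shows "coloring_avg n s c (\<lambda>f. (mono_edges E f - pair_prob n s c * num_edges E)^2)
     = (\<Sum>e\<in>E. \<Sum>e'\<in>E. coloring_avg n s c (\<lambda>f. mono_edge e f * mono_edge e' f) - pair_prob n s c ^ 2)"
proof -
  let ?p = "pair_prob n s c"
  have fin: "finite E" using E finite_edges by (rule finite_subset)
  have "(mono_edges E f - ?p * num_edges E)^2
      = (\<Sum>e\<in>E. \<Sum>e'\<in>E. mono_edge e f * mono_edge e' f - ?p * mono_edge e f - ?p * mono_edge e' f + ?p * ?p)"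
    for f
  proof -
    have "mono_edges E f - ?p * num_edges E = (\<Sum>e\<in>E. mono_edge e f - ?p)"
      using fin by (simp add: mono_edges_eq_sum num_edges_def sum_subtractf mult.commute)
    then show ?thesis by (simp add: power2_eq_square sum_product algebra_simps)
  qed
  moreover have "coloring_avg n s c (\<lambda>f. mono_edge e f * mono_edge e' f - ?p * mono_edge e f
        - ?p * mono_edge e' f + ?p * ?p)
      = coloring_avg n s c (\<lambda>f. mono_edge e f * mono_edge e' f) - ?p ^ 2"
    if "e \<in> E" "e' \<in> E" for e e'
  proof -
    have "e \<in> edges n" "e' \<in> edges n" using that E by auto
    then show ?thesis
      by (simp add: coloring_avg_add coloring_avg_diff coloring_avg_cmult coloring_avg_const[OF comp]
          coloring_avg_mono_edge power2_eq_square)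
  qed
  ultimately show ?thesis by (simp add: coloring_avg_sum)
qed

lemma coloring_avg_sq_dev_mono_edges_bounds:
  assumes E: "E \<subseteq> edges n" and "6 \<le> n" and "0 \<le> \<kappa>"
    and "\<kappa> \<le> cherry_prob n s c - pair_prob n s c ^ 2"
  defines "V \<equiv> coloring_avg n s c (\<lambda>f. (mono_edges E f - pair_prob n s c * num_edges E)^2)"
  shows "\<kappa> / 2 * Sigma2 n E - 16 / real n * num_edges E ^ 2 \<le> V"
    and "V \<le> Sigma2 n E + 16 / real n * num_edges E ^ 2"
proof -
  have "(\<Sum>e\<in>E. \<Sum>e'\<in>E. \<kappa> / 2 * real (card (e \<inter> e')) - 16 / real n) \<le> V"
    unfolding V_def coloring_avg_sq_dev_mono_edges[OF E]
    using E assms(2-4) by (intro sum_mono mono_edge_covariance_bounds(1)) auto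
  then show "\<kappa> / 2 * Sigma2 n E - 16 / real n * num_edges E ^ 2 \<le> V"
    by (simp add: Sigma2_eq_sum_card_Int[OF E] sum_subtractf sum_distrib_left num_edges_def
        power2_eq_square algebra_simps)
  have "V \<le> (\<Sum>e\<in>E. \<Sum>e'\<in>E. real (card (e \<inter> e')) + 16 / real n)"
    unfolding V_def coloring_avg_sq_dev_mono_edges[OF E]
    using E assms(2-4) by (intro sum_mono mono_edge_covariance_bounds(2)) auto
  also have "\<dots> = Sigma2 n E + 16 / real n * num_edges E ^ 2"
    by (simp add: Sigma2_eq_sum_card_Int[OF E] sum.distrib num_edges_def power2_eq_square)
  finally show "V \<le> Sigma2 n E + 16 / real n * num_edges E ^ 2" .
qed

end

section \<open>Convergence of random variables on probability mass functions\<close>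

lemma prob_abs_gt_le_second_moment:
  assumes "integrable (measure_pmf P) (\<lambda>x. X x ^ 2)" "0 < \<epsilon>"
  shows "measure_pmf.prob P {x. \<epsilon> < \<bar>X x\<bar>} \<le> measure_pmf.expectation P (\<lambda>x. X x ^ 2) / \<epsilon>^2"
proof -
  have "measure_pmf.prob P {x. \<epsilon> < \<bar>X x\<bar>} \<le> measure_pmf.prob P {x\<in>space (measure_pmf P). \<epsilon> \<le> \<bar>X x\<bar>}"
    by (intro measure_pmf.finite_measure_mono) auto
  also have "\<dots> \<le> measure_pmf.expectation P (\<lambda>x. X x ^ 2) / \<epsilon>^2"
    using assms by (intro measure_pmf.second_moment_method) auto
  finally show ?thesis .
qed

lemma prob_le_add_prob_on_support:
  assumes "\<And>x. x \<in> set_pmf p \<Longrightarrow> x \<in> A \<Longrightarrow> x \<in> B \<or> x \<in> C"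
  shows "measure_pmf.prob p A \<le> measure_pmf.prob p B + measure_pmf.prob p C"
proof -
  have "measure_pmf.prob p A \<le> measure_pmf.prob p (B \<union> C)"
    using assms by (intro measure_pmf.finite_measure_mono_AE) (auto simp: AE_measure_pmf_iff)
  also have "\<dots> \<le> measure_pmf.prob p B + measure_pmf.prob p C"
    by (rule measure_Un_le) auto
  finally show ?thesis .
qed

lemma conv_in_prob_if_conv_quad_mean:
  assumes fin: "eventually (\<lambda>n. finite (set_pmf (P n))) sequentially" and "conv_quad_mean P X a"
  shows "conv_in_prob P X a"
  unfolding conv_in_prob_def
proof (intro allI impI)
  fix \<epsilon> :: real assume "0 < \<epsilon>"
  have lim: "(\<lambda>n. measure_pmf.expectation (P n) (\<lambda>x. (X n x - a)^2) / \<epsilon>^2) \<longlonglongrightarrow> 0"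
    using assms(2) unfolding conv_quad_mean_def by (rule tendsto_divide_zero)
  have "eventually (\<lambda>n. measure_pmf.prob (P n) {x. \<epsilon> < \<bar>X n x - a\<bar>}
      \<le> measure_pmf.expectation (P n) (\<lambda>x. (X n x - a)^2) / \<epsilon>^2) sequentially"
    using fin by (rule eventually_mono)
      (rule prob_abs_gt_le_second_moment[OF integrable_measure_pmf_finite \<open>0 < \<epsilon>\<close>])
  then show "(\<lambda>n. measure_pmf.prob (P n) {x. \<epsilon> < \<bar>X n x - a\<bar>}) \<longlonglongrightarrow> 0"
    by (intro tendsto_sandwich[OF _ _ tendsto_const lim]) simp_all
qed

lemma conv_in_prob_if_split:
  assumes X: "conv_in_prob P X a" and R: "conv_in_prob P R b"
    and split: "\<And>\<epsilon>. 0 < \<epsilon> \<Longrightarrow> \<exists>\<delta>>0. \<exists>\<eta>>0. eventually (\<lambda>n. \<forall>x\<in>set_pmf (P n).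
        \<epsilon> < \<bar>Y n x - c\<bar> \<longrightarrow> \<delta> < \<bar>X n x - a\<bar> \<or> \<eta> < \<bar>R n x - b\<bar>) sequentially"
  shows "conv_in_prob P Y c"
  unfolding conv_in_prob_def
proof (intro allI impI)
  fix \<epsilon> :: real assume "0 < \<epsilon>"
  then obtain \<delta> \<eta> where "0 < \<delta>" "0 < \<eta>" and ev: "eventually (\<lambda>n. \<forall>x\<in>set_pmf (P n).
      \<epsilon> < \<bar>Y n x - c\<bar> \<longrightarrow> \<delta> < \<bar>X n x - a\<bar> \<or> \<eta> < \<bar>R n x - b\<bar>) sequentially"
    using split by blast
  have "(\<lambda>n. measure_pmf.prob (P n) {x. \<delta> < \<bar>X n x - a\<bar>}
      + measure_pmf.prob (P n) {x. \<eta> < \<bar>R n x - b\<bar>}) \<longlonglongrightarrow> 0 + 0"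
    using X R \<open>0 < \<delta>\<close> \<open>0 < \<eta>\<close> unfolding conv_in_prob_def by (intro tendsto_add) simp_all
  then have lim: "(\<lambda>n. measure_pmf.prob (P n) {x. \<delta> < \<bar>X n x - a\<bar>}
      + measure_pmf.prob (P n) {x. \<eta> < \<bar>R n x - b\<bar>}) \<longlonglongrightarrow> 0" by simp
  have "eventually (\<lambda>n. measure_pmf.prob (P n) {x. \<epsilon> < \<bar>Y n x - c\<bar>}
      \<le> measure_pmf.prob (P n) {x. \<delta> < \<bar>X n x - a\<bar>} + measure_pmf.prob (P n) {x. \<eta> < \<bar>R n x - b\<bar>})
      sequentially"
    using ev by eventually_elim (intro prob_le_add_prob_on_support, blast)
  then show "(\<lambda>n. measure_pmf.prob (P n) {x. \<epsilon> < \<bar>Y n x - c\<bar>}) \<longlonglongrightarrow> 0"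
    by (intro tendsto_sandwich[OF _ _ tendsto_const lim]) simp_all
qed

lemma conv_in_prob_add_iff:
  assumes R: "conv_in_prob P R b"
    and Y: "eventually (\<lambda>n. \<forall>x\<in>set_pmf (P n). Y n x = X n x + R n x) sequentially"
  shows "conv_in_prob P Y (a + b) \<longleftrightarrow> conv_in_prob P X a"
proof
  assume "conv_in_prob P Y (a + b)"
  then show "conv_in_prob P X a"
  proof (rule conv_in_prob_if_split[OF _ R])
    fix \<epsilon> :: real assume "0 < \<epsilon>"
    have split: "\<epsilon> / 2 < \<bar>x + r - (a + b)\<bar> \<or> \<epsilon> / 2 < \<bar>r - b\<bar>" if "\<epsilon> < \<bar>x - a\<bar>" for x r
      using that by arith
    have "eventually (\<lambda>n. \<forall>x\<in>set_pmf (P n). \<epsilon> < \<bar>X n x - a\<bar> \<longrightarrow>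
        \<epsilon> / 2 < \<bar>Y n x - (a + b)\<bar> \<or> \<epsilon> / 2 < \<bar>R n x - b\<bar>) sequentially"
      using Y by (rule eventually_mono) (metis split)
    then show "\<exists>\<delta>>0. \<exists>\<eta>>0. eventually (\<lambda>n. \<forall>x\<in>set_pmf (P n). \<epsilon> < \<bar>X n x - a\<bar> \<longrightarrow>
        \<delta> < \<bar>Y n x - (a + b)\<bar> \<or> \<eta> < \<bar>R n x - b\<bar>) sequentially"
      using \<open>0 < \<epsilon>\<close> by (intro exI[of _ "\<epsilon> / 2"] conjI) auto
  qed
next
  assume "conv_in_prob P X a"
  then show "conv_in_prob P Y (a + b)"
  proof (rule conv_in_prob_if_split[OF _ R])
    fix \<epsilon> :: real assume "0 < \<epsilon>"
    have split: "\<epsilon> / 2 < \<bar>x - a\<bar> \<or> \<epsilon> / 2 < \<bar>r - b\<bar>" if "\<epsilon> < \<bar>x + r - (a + b)\<bar>" for x r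
      using that by arith
    have "eventually (\<lambda>n. \<forall>x\<in>set_pmf (P n). \<epsilon> < \<bar>Y n x - (a + b)\<bar> \<longrightarrow>
        \<epsilon> / 2 < \<bar>X n x - a\<bar> \<or> \<epsilon> / 2 < \<bar>R n x - b\<bar>) sequentially"
      using Y by (rule eventually_mono) (metis split)
    then show "\<exists>\<delta>>0. \<exists>\<eta>>0. eventually (\<lambda>n. \<forall>x\<in>set_pmf (P n). \<epsilon> < \<bar>Y n x - (a + b)\<bar> \<longrightarrow>
        \<delta> < \<bar>X n x - a\<bar> \<or> \<eta> < \<bar>R n x - b\<bar>) sequentially"
      using \<open>0 < \<epsilon>\<close> by (intro exI[of _ "\<epsilon> / 2"] conjI) auto
  qed
qed

lemma conv_in_prob_mult_iff:
  assumes R: "conv_in_prob P R 1"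
    and X: "eventually (\<lambda>n. \<forall>x\<in>set_pmf (P n). X n x = Z n x * R n x) sequentially"
  shows "conv_in_prob P X 0 \<longleftrightarrow> conv_in_prob P Z 0"
proof
  assume "conv_in_prob P X 0"
  then show "conv_in_prob P Z 0"
  proof (rule conv_in_prob_if_split[OF _ R])
    fix \<epsilon> :: real assume "0 < \<epsilon>"
    have split: "\<epsilon> / 2 < \<bar>z * r - 0\<bar> \<or> 1 / 2 < \<bar>r - 1\<bar>" if "\<epsilon> < \<bar>z - 0\<bar>" for z r :: real
    proof (cases "1 / 2 < \<bar>r - 1\<bar>")
      case False
      then have "1 / 2 \<le> \<bar>r\<bar>" by linarith
      then have "\<bar>z\<bar> / 2 \<le> \<bar>z * r\<bar>" using mult_left_mono[of "1 / 2" "\<bar>r\<bar>" "\<bar>z\<bar>"] by (simp add: abs_mult)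
      then show ?thesis using that by linarith
    qed simp
    have "eventually (\<lambda>n. \<forall>x\<in>set_pmf (P n). \<epsilon> < \<bar>Z n x - 0\<bar> \<longrightarrow>
        \<epsilon> / 2 < \<bar>X n x - 0\<bar> \<or> 1 / 2 < \<bar>R n x - 1\<bar>) sequentially"
      using X by (rule eventually_mono) (metis split)
    then show "\<exists>\<delta>>0. \<exists>\<eta>>0. eventually (\<lambda>n. \<forall>x\<in>set_pmf (P n). \<epsilon> < \<bar>Z n x - 0\<bar> \<longrightarrow>
        \<delta> < \<bar>X n x - 0\<bar> \<or> \<eta> < \<bar>R n x - 1\<bar>) sequentially"
      using \<open>0 < \<epsilon>\<close> by (intro exI[of _ "\<epsilon> / 2"] exI[of _ "1 / 2"] conjI) auto
  qed
next
  assume "conv_in_prob P Z 0"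
  then show "conv_in_prob P X 0"
  proof (rule conv_in_prob_if_split[OF _ R])
    fix \<epsilon> :: real assume "0 < \<epsilon>"
    have split: "\<epsilon> / 2 < \<bar>z - 0\<bar> \<or> 1 < \<bar>r - 1\<bar>" if "\<epsilon> < \<bar>z * r - 0\<bar>" for z r :: real
    proof (cases "1 < \<bar>r - 1\<bar>")
      case False
      then have "\<bar>r\<bar> \<le> 2" by linarith
      then have "\<bar>z * r\<bar> \<le> \<bar>z\<bar> * 2" using mult_left_mono[of "\<bar>r\<bar>" 2 "\<bar>z\<bar>"] by (simp add: abs_mult)
      then show ?thesis using that by linarith
    qed simp
    have "eventually (\<lambda>n. \<forall>x\<in>set_pmf (P n). \<epsilon> < \<bar>X n x - 0\<bar> \<longrightarrow>
        \<epsilon> / 2 < \<bar>Z n x - 0\<bar> \<or> 1 < \<bar>R n x - 1\<bar>) sequentially"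
      using X by (rule eventually_mono) (metis split)
    then show "\<exists>\<delta>>0. \<exists>\<eta>>0. eventually (\<lambda>n. \<forall>x\<in>set_pmf (P n). \<epsilon> < \<bar>X n x - 0\<bar> \<longrightarrow>
        \<delta> < \<bar>Z n x - 0\<bar> \<or> \<eta> < \<bar>R n x - 1\<bar>) sequentially"
      using \<open>0 < \<epsilon>\<close> by (intro exI[of _ "\<epsilon> / 2"] exI[of _ 1] conjI) auto
  qed
qed

lemma tendsto_zero_if_eventually_le_add:
  fixes x :: "nat \<Rightarrow> real"
  assumes "\<And>r. 0 < r \<Longrightarrow> \<exists>g. g \<longlonglongrightarrow> 0 \<and> eventually (\<lambda>n. \<bar>x n\<bar> \<le> r + g n) sequentially"
  shows "x \<longlonglongrightarrow> 0"
proof (rule tendstoI)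
  fix e :: real assume "0 < e"
  then obtain g where "g \<longlonglongrightarrow> 0" and le: "eventually (\<lambda>n. \<bar>x n\<bar> \<le> e / 2 + g n) sequentially"
    using assms[of "e / 2"] by auto
  then have "eventually (\<lambda>n. dist (g n) 0 < e / 2) sequentially" using \<open>0 < e\<close> by (intro tendstoD) auto
  with le show "eventually (\<lambda>n. dist (x n) 0 < e) sequentially" by eventually_elim auto
qed

lemma expectation_of_bool_eq_prob:
  "measure_pmf.expectation p (\<lambda>x. of_bool (Q x)) = measure_pmf.prob p {x. Q x}"
proof -
  have "(\<lambda>x. of_bool (Q x) :: real) = indicator {x. Q x}" by (auto simp: indicator_def)
  then show ?thesis by simp
qed

lemma sq_le_sq_add_dominated:
  fixes x r K \<epsilon> :: real
  assumes "x ^ 2 \<le> K * r ^ 2" "0 \<le> K" "0 < \<epsilon>"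
  shows "x ^ 2 \<le> \<epsilon>^2 + K * (2 * (r - 1)^2 + 2 * of_bool (\<epsilon> < \<bar>x\<bar>))"
proof (cases "\<epsilon> < \<bar>x\<bar>")
  case True
  have "r ^ 2 \<le> 2 * (r - 1)^2 + 2"
    using zero_le_power2[of "r - 2"] by (simp add: power2_eq_square algebra_simps)
  then have "x ^ 2 \<le> K * (2 * (r - 1)^2 + 2)"
    using assms(1) mult_left_mono[OF _ assms(2)] by (meson order_trans)
  then have "x ^ 2 \<le> \<epsilon>^2 + K * (2 * (r - 1)^2 + 2)" using zero_le_power2[of \<epsilon>] by linarith
  then show ?thesis using True by simp
next
  case False
  then have "x ^ 2 \<le> \<epsilon>^2" using assms(3) by (simp add: abs_le_square_iff[symmetric])
  then show ?thesis using assms(2) by (simp add: add_increasing2)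
qed

text \<open>The domination makes the X n x^2 uniformly integrable, since R n x^2 is at most
  2 (R n x - 1)^2 + 2 and R tends to 1 in quadratic mean.\<close>

lemma conv_quad_mean_zero_iff_conv_in_prob:
  assumes fin: "eventually (\<lambda>n. finite (set_pmf (P n))) sequentially"
    and R: "conv_quad_mean P R 1" and "0 \<le> K"
    and dom: "eventually (\<lambda>n. \<forall>x\<in>set_pmf (P n). X n x ^ 2 \<le> K * R n x ^ 2) sequentially"
  shows "conv_quad_mean P X 0 \<longleftrightarrow> conv_in_prob P X 0"
proof
  show "conv_quad_mean P X 0 \<Longrightarrow> conv_in_prob P X 0" by (rule conv_in_prob_if_conv_quad_mean[OF fin])
next
  assume X: "conv_in_prob P X 0"
  let ?E = "\<lambda>n f. measure_pmf.expectation (P n) f"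
  let ?Q = "\<lambda>n. ?E n (\<lambda>x. (R n x - 1)^2)" and ?p = "\<lambda>n \<epsilon>. measure_pmf.prob (P n) {x. \<epsilon> < \<bar>X n x - 0\<bar>}"
  show "conv_quad_mean P X 0"
    unfolding conv_quad_mean_def
  proof (rule tendsto_zero_if_eventually_le_add)
    fix r :: real assume "0 < r"
    define \<epsilon> where "\<epsilon> = sqrt r"
    have "0 < \<epsilon>" "\<epsilon>^2 = r" using \<open>0 < r\<close> by (simp_all add: \<epsilon>_def)
    have pointwise: "X n x ^ 2 \<le> \<epsilon>^2 + K * (2 * (R n x - 1)^2 + 2 * of_bool (\<epsilon> < \<bar>X n x - 0\<bar>))"
      if "X n x ^ 2 \<le> K * R n x ^ 2" for n x
      using sq_le_sq_add_dominated[OF that \<open>0 \<le> K\<close> \<open>0 < \<epsilon>\<close>] by simp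
    define g where "g n = K * (2 * ?Q n + 2 * ?p n \<epsilon>)" for n
    have "g \<longlonglongrightarrow> K * (2 * 0 + 2 * 0)"
      using R X \<open>0 < \<epsilon>\<close> unfolding g_def conv_quad_mean_def conv_in_prob_def by (intro tendsto_intros) auto
    moreover have "eventually (\<lambda>n. \<bar>?E n (\<lambda>x. (X n x - 0)^2)\<bar> \<le> r + g n) sequentially"
      using dom fin
    proof eventually_elim
      case (elim n)
      have "?E n (\<lambda>x. (X n x - 0)^2)
          \<le> ?E n (\<lambda>x. \<epsilon>^2 + K * (2 * (R n x - 1)^2 + 2 * of_bool (\<epsilon> < \<bar>X n x - 0\<bar>)))"
        using elim pointwise
        by (intro integral_mono_AE integrable_measure_pmf_finite) (simp_all add: AE_measure_pmf_iff)
      also have "\<dots> = r + g n"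
        using elim \<open>\<epsilon>^2 = r\<close>
        by (simp add: g_def integrable_measure_pmf_finite Bochner_Integration.integral_add
            expectation_of_bool_eq_prob)
      finally show ?case by simp
    qed
    ultimately show "\<exists>g. g \<longlonglongrightarrow> 0 \<and> eventually (\<lambda>n. \<bar>?E n (\<lambda>x. (X n x - 0)^2)\<bar> \<le> r + g n) sequentially"
      by auto
  qed
qed

lemma conv_quad_mean_map_pmf:
  assumes "\<And>n. map_pmf g (Q n) = P n" and "conv_quad_mean P X a"
  shows "conv_quad_mean Q (\<lambda>n x. X n (g x)) a"
  using assms(2) unfolding conv_quad_mean_def by (simp flip: assms(1))

section \<open>Random graphs with a uniform coloring\<close>

lemma map_fst_colored_graph: "map_pmf fst (colored_graph G n s c) = G"
  by (simp add: colored_graph_def map_bind_pmf map_pmf_comp bind_return_pmf')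

lemma finite_set_pmf_simple_graphs: "set_pmf G \<subseteq> simple_graphs n \<Longrightarrow> finite (set_pmf G)"
  using finite_simple_graphs by (rule finite_subset[rotated])

context
  fixes n s :: nat and c :: "nat \<Rightarrow> nat" and G :: "nat set set pmf"
  assumes comp: "is_composition n s c" and graphs: "set_pmf G \<subseteq> simple_graphs n"
begin

lemma set_pmf_colored_graph: "set_pmf (colored_graph G n s c) \<subseteq> set_pmf G \<times> colorings n s c"
  using colorings_nonempty[OF comp] finite_colorings by (auto simp: colored_graph_def)

lemma finite_set_pmf_colored_graph: "finite (set_pmf (colored_graph G n s c))"
  using set_pmf_colored_graph by (rule finite_subset) (simp add: finite_set_pmf_simple_graphs[OF graphs] finite_colorings)

lemma expectation_colored_graph:
  "measure_pmf.expectation (colored_graph G n s c) \<phi>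
     = measure_pmf.expectation G (\<lambda>E. coloring_avg n s c (\<lambda>f. \<phi> (E, f)))"
proof -
  have "measure_pmf.expectation (colored_graph G n s c) \<phi> = (\<Sum>E\<in>set_pmf G.
      pmf G E *\<^sub>R measure_pmf.expectation (map_pmf (\<lambda>f. (E, f)) (pmf_of_set (colorings n s c))) \<phi>)"
    unfolding colored_graph_def using colorings_nonempty[OF comp] finite_colorings finite_set_pmf_simple_graphs[OF graphs]
    by (intro pmf_expectation_bind) auto
  also have "\<dots> = (\<Sum>E\<in>set_pmf G. coloring_avg n s c (\<lambda>f. \<phi> (E, f)) * pmf G E)"
    using colorings_nonempty[OF comp] finite_colorings
    by (intro sum.cong refl) (simp add: integral_pmf_of_set coloring_avg_def)
  also have "\<dots> = measure_pmf.expectation G (\<lambda>E. coloring_avg n s c (\<lambda>f. \<phi> (E, f)))"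
    using finite_set_pmf_simple_graphs[OF graphs] by (intro integral_measure_pmf_real[symmetric]) auto
  finally show ?thesis .
qed

lemma expectation_mono_edges_colored_graph:
  "measure_pmf.expectation (colored_graph G n s c) (\<lambda>x. mono_edges (fst x) (snd x))
     = pair_prob n s c * measure_pmf.expectation G num_edges"
proof -
  have "measure_pmf.expectation G (\<lambda>E. coloring_avg n s c (mono_edges E))
      = measure_pmf.expectation G (\<lambda>E. pair_prob n s c * num_edges E)"
    using graphs
    by (intro integral_cong_AE) (auto simp: AE_measure_pmf_iff coloring_avg_mono_edges[OF comp]
        simple_graphs_eq_Pow_edges)
  then show ?thesis by (simp add: expectation_colored_graph)
qed

lemma expectation_sq_dev_mono_edges_bounds:
  assumes "6 \<le> n" "0 \<le> \<kappa>" "\<kappa> \<le> cherry_prob n s c - pair_prob n s c ^ 2"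
  defines "V \<equiv> measure_pmf.expectation (colored_graph G n s c)
      (\<lambda>x. (mono_edges (fst x) (snd x) - pair_prob n s c * num_edges (fst x))^2)"
  shows "\<kappa> / 2 * measure_pmf.expectation G (Sigma2 n)
      - 16 / real n * measure_pmf.expectation G (\<lambda>E. num_edges E ^ 2) \<le> V"
    and "V \<le> measure_pmf.expectation G (Sigma2 n)
      + 16 / real n * measure_pmf.expectation G (\<lambda>E. num_edges E ^ 2)"
proof -
  let ?W = "\<lambda>E. coloring_avg n s c (\<lambda>f. (mono_edges E f - pair_prob n s c * num_edges E)^2)"
  have V: "V = measure_pmf.expectation G ?W" unfolding V_def by (simp add: expectation_colored_graph)
  have E: "E \<subseteq> edges n" if "E \<in> set_pmf G" for E
    using that graphs by (auto simp: simple_graphs_eq_Pow_edges)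
  have int: "integrable (measure_pmf G) f" for f :: "nat set set \<Rightarrow> real"
    using finite_set_pmf_simple_graphs[OF graphs] by (rule integrable_measure_pmf_finite)
  have "measure_pmf.expectation G (\<lambda>E. \<kappa> / 2 * Sigma2 n E - 16 / real n * num_edges E ^ 2)
      \<le> measure_pmf.expectation G ?W"
    using coloring_avg_sq_dev_mono_edges_bounds(1)[OF comp E assms(1-3)]
    by (intro integral_mono_AE int) (simp add: AE_measure_pmf_iff)
  then show "\<kappa> / 2 * measure_pmf.expectation G (Sigma2 n)
      - 16 / real n * measure_pmf.expectation G (\<lambda>E. num_edges E ^ 2) \<le> V"
    by (simp add: V int)
  have "measure_pmf.expectation G ?W
      \<le> measure_pmf.expectation G (\<lambda>E. Sigma2 n E + 16 / real n * num_edges E ^ 2)"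
    using coloring_avg_sq_dev_mono_edges_bounds(2)[OF comp E assms(1-3)]
    by (intro integral_mono_AE int) (simp add: AE_measure_pmf_iff)
  then show "V \<le> measure_pmf.expectation G (Sigma2 n)
      + 16 / real n * measure_pmf.expectation G (\<lambda>E. num_edges E ^ 2)"
    by (simp add: V int)
qed

end

lemma eventually_pair_prob_and_cherry_gap:
  assumes comp: "eventually (\<lambda>n. is_composition n s (c n)) sequentially"
    and "0 < \<delta>" and class_ge: "eventually (\<lambda>n. \<forall>i<s. \<delta> \<le> real (c n i) / real n) sequentially"
    and "0 < \<delta>'" and off_center: "eventually (\<lambda>n.
      \<delta>' \<le> sqrt (\<Sum>i<s. (real (c n i) / real n - 1 / real s)^2)) sequentially"
  shows "eventually (\<lambda>n. is_composition n s (c n) \<and> 6 \<le> n \<and> \<delta> / 2 \<le> pair_prob n s (c n)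
    \<and> \<delta> * \<delta>'^2 / 2 \<le> cherry_prob n s (c n) - pair_prob n s (c n) ^ 2) sequentially"
proof -
  have "eventually (\<lambda>n. 1 / real n < \<delta> / 2) sequentially"
    "eventually (\<lambda>n. 3 / real n < \<delta> * \<delta>'^2 / 2) sequentially"
    using \<open>0 < \<delta>\<close> \<open>0 < \<delta>'\<close>
    by (intro order_tendstoD(2)[OF lim_const_over_n[of "1::real"]]
        order_tendstoD(2)[OF lim_const_over_n[of "3::real"]]; simp)+
  then show ?thesis using comp class_ge off_center eventually_ge_at_top[of 6]
  proof eventually_elim
    case (elim n)
    have "0 \<le> (\<Sum>i<s. (real (c n i) / real n - 1 / real s)^2)" by (simp add: sum_nonneg)
    then have "\<delta>' ^ 2 \<le> (\<Sum>i<s. (real (c n i) / real n - 1 / real s)^2)"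
      using power_mono[OF elim(5), of 2] \<open>0 < \<delta>'\<close> by simp
    then have "\<delta> * \<delta>' ^ 2 \<le> \<delta> * (\<Sum>i<s. (real (c n i) / real n - 1 / real s)^2)"
      using \<open>0 < \<delta>\<close> by simp
    moreover have "\<delta> * (\<Sum>i<s. (real (c n i) / real n - 1 / real s)^2) - 3 / real n
        \<le> cherry_prob n s (c n) - pair_prob n s (c n) ^ 2"
      using cherry_prob_sub_pair_prob_sq_ge[OF elim(3)] elim(4,6) \<open>0 < \<delta>\<close> by simp
    ultimately have "\<delta> * \<delta>'^2 / 2 \<le> cherry_prob n s (c n) - pair_prob n s (c n) ^ 2"
      using elim(2) by linarith
    moreover have "\<delta> / 2 \<le> pair_prob n s (c n)"
      using pair_prob_ge[OF elim(3), of \<delta>] elim(1,4,6) by simp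
    ultimately show ?case using elim(3,6) by simp
  qed
qed

locale colored_random_graphs =
  fixes s :: nat and G :: "nat \<Rightarrow> nat set set pmf" and c :: "nat \<Rightarrow> nat \<Rightarrow> nat" and \<delta> \<kappa> :: real
  assumes graphs: "\<And>n. set_pmf (G n) \<subseteq> simple_graphs n"
    and \<delta>: "0 < \<delta>" and \<kappa>: "0 < \<kappa>"
    and regular: "eventually (\<lambda>n. is_composition n s (c n) \<and> 6 \<le> n \<and> \<delta> \<le> pair_prob n s (c n)
        \<and> \<kappa> \<le> cherry_prob n s (c n) - pair_prob n s (c n) ^ 2
        \<and> 0 < measure_pmf.expectation (G n) num_edges) sequentially"
    and edges_qm: "conv_quad_mean G (\<lambda>n E. num_edges E / measure_pmf.expectation (G n) num_edges) 1"
begin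

abbreviation mean_edges :: "nat \<Rightarrow> real" where
  "mean_edges n \<equiv> measure_pmf.expectation (G n) num_edges"

abbreviation colored :: "nat \<Rightarrow> (nat set set \<times> (nat \<Rightarrow> nat)) pmf" where
  "colored n \<equiv> colored_graph (G n) n s (c n)"

definition edge_ratio :: "nat \<Rightarrow> nat set set \<Rightarrow> real" where
  "edge_ratio n E = num_edges E / mean_edges n"

definition degree_ratio :: "nat \<Rightarrow> nat set set \<Rightarrow> real" where
  "degree_ratio n E = sqrt (Sigma2 n E) / mean_edges n"

text \<open>Given the graph E, the conditional mean of the number of monochromatic edges is
  pair_prob n s (c n) * num_edges E, and its mean is pair_prob n s (c n) * mean_edges n.\<close>

definition mono_dev :: "nat \<Rightarrow> nat set set \<times> (nat \<Rightarrow> nat) \<Rightarrow> real" where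
  "mono_dev n x = (mono_edges (fst x) (snd x) - pair_prob n s (c n) * num_edges (fst x))
     / (pair_prob n s (c n) * mean_edges n)"

lemma finite_set_pmf_graphs: "finite (set_pmf (G n))"
  using graphs by (rule finite_set_pmf_simple_graphs)

lemma eventually_finite_colored: "eventually (\<lambda>n. finite (set_pmf (colored n))) sequentially"
  using regular by (rule eventually_mono) (simp add: finite_set_pmf_colored_graph[OF _ graphs])

lemma edge_ratio_conv_quad_mean: "conv_quad_mean G edge_ratio 1"
  using edges_qm unfolding edge_ratio_def .

lemma edge_ratio_fst_conv_quad_mean: "conv_quad_mean colored (\<lambda>n x. edge_ratio n (fst x)) 1"
  by (rule conv_quad_mean_map_pmf[OF map_fst_colored_graph edge_ratio_conv_quad_mean])

lemma edge_ratio_fst_conv_in_prob: "conv_in_prob colored (\<lambda>n x. edge_ratio n (fst x)) 1"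
  by (rule conv_in_prob_if_conv_quad_mean[OF eventually_finite_colored edge_ratio_fst_conv_quad_mean])

lemma edge_ratio_sq_over_n_tendsto_zero:
  "(\<lambda>n. 16 / real n * measure_pmf.expectation (G n) (\<lambda>E. edge_ratio n E ^ 2)) \<longlonglongrightarrow> 0"
proof -
  let ?Q = "\<lambda>n. measure_pmf.expectation (G n) (\<lambda>E. (edge_ratio n E - 1)^2)"
  have "?Q \<longlonglongrightarrow> 0" using edge_ratio_conv_quad_mean unfolding conv_quad_mean_def .
  then have "(\<lambda>n. 2 * ?Q n + 2) \<longlonglongrightarrow> 2 * 0 + 2" by (intro tendsto_add tendsto_mult_left tendsto_const)
  from tendsto_mult[OF lim_const_over_n[of "16::real"] this]
  have lim: "(\<lambda>n. 16 / real n * (2 * ?Q n + 2)) \<longlonglongrightarrow> 0" by (simp only: mult_zero_left)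
  have le: "16 / real n * measure_pmf.expectation (G n) (\<lambda>E. edge_ratio n E ^ 2)
      \<le> 16 / real n * (2 * ?Q n + 2)" for n
  proof -
    have "r ^ 2 \<le> 2 * (r - 1)^2 + 2" for r :: real
      using zero_le_power2[of "r - 2"] by (simp add: power2_eq_square algebra_simps)
    then have "measure_pmf.expectation (G n) (\<lambda>E. edge_ratio n E ^ 2)
        \<le> measure_pmf.expectation (G n) (\<lambda>E. 2 * (edge_ratio n E - 1)^2 + 2)"
      by (intro integral_mono integrable_measure_pmf_finite finite_set_pmf_graphs)
    also have "\<dots> = 2 * ?Q n + 2"
      by (simp add: integrable_measure_pmf_finite finite_set_pmf_graphs)
    finally show ?thesis by (rule mult_left_mono) simp
  qed
  have nonneg: "0 \<le> 16 / real n * measure_pmf.expectation (G n) (\<lambda>E. edge_ratio n E ^ 2)" for n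
    by simp
  show ?thesis
    by (rule tendsto_sandwich[OF always_eventually always_eventually tendsto_const lim])
      (use le nonneg in auto)
qed

lemma edge_ratio_conv_in_prob: "conv_in_prob G edge_ratio 1"
  by (rule conv_in_prob_if_conv_quad_mean[OF always_eventually edge_ratio_conv_quad_mean])
    (simp add: finite_set_pmf_graphs)

text \<open>The conditional variance of the number of monochromatic edges is comparable to the sum
  of squared degrees.\<close>

lemma mono_dev_degree_ratio_bounds:
  defines "A \<equiv> \<lambda>n. measure_pmf.expectation (G n) (\<lambda>E. degree_ratio n E ^ 2)"
    and "V \<equiv> \<lambda>n. measure_pmf.expectation (colored n) (\<lambda>x. mono_dev n x ^ 2)"
    and "h \<equiv> \<lambda>n. 16 / real n * measure_pmf.expectation (G n) (\<lambda>E. edge_ratio n E ^ 2)"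
  shows "eventually (\<lambda>n. V n \<le> (A n + h n) / \<delta>^2 \<and> A n \<le> 2 / \<kappa> * (V n + h n)) sequentially"
  using regular
proof eventually_elim
  case (elim n)
  let ?p = "pair_prob n s (c n)" and ?\<mu> = "mean_edges n"
  let ?S = "measure_pmf.expectation (colored n)
      (\<lambda>x. (mono_edges (fst x) (snd x) - ?p * num_edges (fst x))^2)"
  let ?a = "measure_pmf.expectation (G n) (Sigma2 n)"
  let ?b = "measure_pmf.expectation (G n) (\<lambda>E. num_edges E ^ 2)"
  have "0 < ?\<mu>" "\<delta> \<le> ?p" "?p \<le> 1" using elim pair_prob_le_1 by auto
  have bounds: "\<kappa> / 2 * ?a - 16 / real n * ?b \<le> ?S" "?S \<le> ?a + 16 / real n * ?b"
    using expectation_sq_dev_mono_edges_bounds[of n s "c n" "G n" \<kappa>] elim graphs \<kappa> by auto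
  have A: "A n = ?a / ?\<mu>^2" by (simp add: A_def degree_ratio_def power_divide Sigma2_nonneg)
  have V: "V n = ?S / ?p^2 / ?\<mu>^2" by (simp add: V_def mono_dev_def power_divide power_mult_distrib)
  have h: "h n = 16 / real n * ?b / ?\<mu>^2" by (simp add: h_def edge_ratio_def power_divide)
  have "0 \<le> ?S" "0 \<le> ?a" "0 \<le> ?b" by (simp_all add: integral_nonneg Sigma2_nonneg)
  have "\<delta>^2 \<le> ?p^2" using \<delta> \<open>\<delta> \<le> ?p\<close> by (intro power_mono) auto
  have "V n \<le> (?a + 16 / real n * ?b) / \<delta>^2 / ?\<mu>^2"
    unfolding V using \<open>0 < ?\<mu>\<close> \<delta> \<open>\<delta>^2 \<le> ?p^2\<close> \<open>0 \<le> ?a\<close> \<open>0 \<le> ?b\<close> bounds(2)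
    by (intro divide_right_mono frac_le) auto
  also have "\<dots> = (A n + h n) / \<delta>^2" by (simp add: A h add_divide_distrib ac_simps)
  finally have V_le: "V n \<le> (A n + h n) / \<delta>^2" .
  have "\<kappa> / 2 * A n - h n \<le> ?S / ?\<mu>^2"
    using divide_right_mono[OF bounds(1), of "?\<mu>^2"] by (simp add: A h diff_divide_distrib)
  moreover have "?S / ?\<mu>^2 \<le> V n"
  proof -
    have "0 < ?p^2" "?p^2 \<le> 1" using \<delta> \<open>\<delta> \<le> ?p\<close> \<open>?p \<le> 1\<close> by (auto intro: power_le_one)
    then have "?S \<le> ?S / ?p^2" using \<open>0 \<le> ?S\<close> by (simp add: le_divide_eq mult_left_le)
    then show ?thesis unfolding V by (rule divide_right_mono) simp
  qed
  ultimately have "\<kappa> / 2 * A n \<le> V n + h n" by linarith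
  then have "2 / \<kappa> * (\<kappa> / 2 * A n) \<le> 2 / \<kappa> * (V n + h n)" using \<kappa> by (intro mult_left_mono) auto
  then have "A n \<le> 2 / \<kappa> * (V n + h n)" using \<kappa> by simp
  with V_le show ?case by blast
qed

lemma degree_ratio_iff_mono_dev: "conv_quad_mean G degree_ratio 0 \<longleftrightarrow> conv_quad_mean colored mono_dev 0"
proof -
  let ?A = "\<lambda>n. measure_pmf.expectation (G n) (\<lambda>E. degree_ratio n E ^ 2)"
  let ?V = "\<lambda>n. measure_pmf.expectation (colored n) (\<lambda>x. mono_dev n x ^ 2)"
  let ?h = "\<lambda>n. 16 / real n * measure_pmf.expectation (G n) (\<lambda>E. edge_ratio n E ^ 2)"
  have A0: "eventually (\<lambda>n. 0 \<le> ?A n) sequentially"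
    and V0: "eventually (\<lambda>n. 0 \<le> ?V n) sequentially" by (simp_all add: integral_nonneg)
  have V_le: "eventually (\<lambda>n. ?V n \<le> (?A n + ?h n) / \<delta>^2) sequentially"
    and A_le: "eventually (\<lambda>n. ?A n \<le> 2 / \<kappa> * (?V n + ?h n)) sequentially"
    using mono_dev_degree_ratio_bounds by (auto elim: eventually_mono)
  have "?A \<longlonglongrightarrow> 0 \<longleftrightarrow> ?V \<longlonglongrightarrow> 0"
  proof
    assume "?A \<longlonglongrightarrow> 0"
    from tendsto_add[OF this edge_ratio_sq_over_n_tendsto_zero]
    have "(\<lambda>n. (?A n + ?h n) / \<delta>^2) \<longlonglongrightarrow> 0" by (intro tendsto_divide_zero) simp
    then show "?V \<longlonglongrightarrow> 0" by (rule tendsto_sandwich[OF V0 V_le tendsto_const])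
  next
    assume "?V \<longlonglongrightarrow> 0"
    from tendsto_mult_left[OF tendsto_add[OF this edge_ratio_sq_over_n_tendsto_zero], of "2 / \<kappa>"]
    have "(\<lambda>n. 2 / \<kappa> * (?V n + ?h n)) \<longlonglongrightarrow> 0" by simp
    then show "?A \<longlonglongrightarrow> 0" by (rule tendsto_sandwich[OF A0 A_le tendsto_const])
  qed
  then show ?thesis by (simp add: conv_quad_mean_def)
qed

lemma mono_dev_conv_quad_mean_iff: "conv_quad_mean colored mono_dev 0 \<longleftrightarrow> conv_in_prob colored mono_dev 0"
proof (rule conv_quad_mean_zero_iff_conv_in_prob[OF eventually_finite_colored edge_ratio_fst_conv_quad_mean])
  show "0 \<le> 1 / \<delta>^2" by simp
  show "eventually (\<lambda>n. \<forall>x\<in>set_pmf (colored n).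
      mono_dev n x ^ 2 \<le> 1 / \<delta>^2 * edge_ratio n (fst x) ^ 2) sequentially"
    using regular
  proof eventually_elim
    case (elim n)
    show ?case
    proof
      fix x assume x: "x \<in> set_pmf (colored n)"
      let ?p = "pair_prob n s (c n)" and ?M = "mono_edges (fst x) (snd x)" and ?m = "num_edges (fst x)"
      have "?p \<le> 1" using elim pair_prob_le_1 by blast
      have "fst x \<in> simple_graphs n" using x set_pmf_colored_graph[OF _ graphs] elim graphs by fastforce
      then have "?M \<le> ?m" by (intro mono_edges_le_num_edges finite_simple_graph)
      moreover have "0 \<le> ?M" "0 \<le> ?m" by (simp_all add: mono_edges_def num_edges_def)
      moreover have "0 \<le> ?p * ?m" "?p * ?m \<le> ?m"
        using \<open>0 \<le> ?m\<close> \<open>?p \<le> 1\<close> elim \<delta> by (simp_all add: mult_left_le_one_le)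
      ultimately have "\<bar>?M - ?p * ?m\<bar> \<le> \<bar>?m\<bar>" by linarith
      then have "(?M - ?p * ?m)^2 \<le> ?m^2" by (simp add: abs_le_square_iff)
      then have "mono_dev n x ^ 2 \<le> ?m^2 / (?p^2 * mean_edges n ^ 2)"
        by (simp add: mono_dev_def power_divide power_mult_distrib divide_right_mono)
      also have "\<dots> \<le> ?m^2 / (\<delta>^2 * mean_edges n ^ 2)"
        using elim \<delta> by (intro divide_left_mono mult_right_mono power_mono) auto
      also have "\<dots> = 1 / \<delta>^2 * edge_ratio n (fst x) ^ 2" by (simp add: edge_ratio_def power_divide)
      finally show "mono_dev n x ^ 2 \<le> 1 / \<delta>^2 * edge_ratio n (fst x) ^ 2" .
    qed
  qed
qed

lemma mono_edges_ratio_iff_mono_dev: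
  "conv_in_prob colored (\<lambda>n x. mono_edges (fst x) (snd x)
      / measure_pmf.expectation (colored n) (\<lambda>x. mono_edges (fst x) (snd x))) 1
    \<longleftrightarrow> conv_in_prob colored mono_dev 0"
proof -
  have "eventually (\<lambda>n. \<forall>x\<in>set_pmf (colored n). mono_edges (fst x) (snd x)
      / measure_pmf.expectation (colored n) (\<lambda>x. mono_edges (fst x) (snd x))
      = mono_dev n x + edge_ratio n (fst x)) sequentially"
    using regular
  proof eventually_elim
    case (elim n)
    then have "pair_prob n s (c n) \<noteq> 0" "mean_edges n \<noteq> 0" using \<delta> by auto
    then show ?case
      using elim by (simp add: expectation_mono_edges_colored_graph[OF _ graphs] mono_dev_def
          edge_ratio_def field_simps)
  qed
  from conv_in_prob_add_iff[OF edge_ratio_fst_conv_in_prob this, of 0] show ?thesis by simp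
qed

lemma degree_ratio_iff_zeta: "conv_quad_mean G degree_ratio 0 \<longleftrightarrow> conv_in_prob G (\<lambda>n. zeta n) 0"
proof -
  have "conv_quad_mean G degree_ratio 0 \<longleftrightarrow> conv_in_prob G degree_ratio 0"
  proof (rule conv_quad_mean_zero_iff_conv_in_prob[OF _ edge_ratio_conv_quad_mean])
    show "eventually (\<lambda>n. finite (set_pmf (G n))) sequentially" by (simp add: finite_set_pmf_graphs)
    have "degree_ratio n E ^ 2 \<le> 2 * edge_ratio n E ^ 2" if "E \<in> set_pmf (G n)" for n E
    proof -
      have "Sigma2 n E \<le> 2 * num_edges E ^ 2"
        using that graphs by (intro Sigma2_le) (auto simp: simple_graphs_eq_Pow_edges)
      then show ?thesis
        by (simp add: degree_ratio_def edge_ratio_def power_divide Sigma2_nonneg divide_right_mono)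
    qed
    then show "eventually (\<lambda>n. \<forall>E\<in>set_pmf (G n). degree_ratio n E ^ 2 \<le> 2 * edge_ratio n E ^ 2) sequentially"
      by simp
  qed simp
  also have "\<dots> \<longleftrightarrow> conv_in_prob G (\<lambda>n. zeta n) 0"
  proof (rule conv_in_prob_mult_iff[OF edge_ratio_conv_in_prob])
    have "degree_ratio n E = zeta n E * edge_ratio n E" if "E \<in> set_pmf (G n)" for n E
    proof -
      have "finite E" using that graphs finite_simple_graph by blast
      then show ?thesis
        by (cases "E = {}") (simp_all add: degree_ratio_def zeta_def edge_ratio_def num_edges_def)
    qed
    then show "eventually (\<lambda>n. \<forall>E\<in>set_pmf (G n). degree_ratio n E = zeta n E * edge_ratio n E) sequentially"
      by simp
  qed
  finally show ?thesis .
qed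

lemma degree_ratio_iff_Sigma2:
  "conv_quad_mean G degree_ratio 0
    \<longleftrightarrow> (\<lambda>n. measure_pmf.expectation (G n) (Sigma2 n) / mean_edges n ^ 2) \<longlonglongrightarrow> 0"
  by (simp add: conv_quad_mean_def degree_ratio_def power_divide Sigma2_nonneg)

end

theorem theorem1p2:
  fixes s :: nat
    and G :: "nat \<Rightarrow> nat set set pmf"
    and c :: "nat \<Rightarrow> nat \<Rightarrow> nat"
  assumes s2: "s \<ge> 2"
    and graphs: "\<And>n. set_pmf (G n) \<subseteq> simple_graphs n"
    and comp: "eventually (\<lambda>n. is_composition n s (c n)) sequentially"
    and away_boundary: "\<exists>\<delta>>0. eventually (\<lambda>n. \<forall>i<s. real (c n i) / real n \<ge> \<delta>) sequentially"
    and away_center: "\<exists>\<delta>>0. eventually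
          (\<lambda>n. sqrt (\<Sum>i<s. (real (c n i) / real n - 1 / real s) ^ 2) \<ge> \<delta>) sequentially"
    and Em_pos: "\<exists>\<delta>>0. eventually
          (\<lambda>n. measure_pmf.expectation (G n) num_edges \<ge> \<delta>) sequentially"
    and m_qm: "conv_quad_mean G
          (\<lambda>n E. num_edges E / measure_pmf.expectation (G n) num_edges) 1"
  shows "(conv_in_prob (\<lambda>n. colored_graph (G n) n s (c n))
            (\<lambda>n x. mono_edges (fst x) (snd x) /
                   measure_pmf.expectation (colored_graph (G n) n s (c n)) (\<lambda>x. mono_edges (fst x) (snd x))) 1
          \<longleftrightarrow> (\<lambda>n. measure_pmf.expectation (G n) (Sigma2 n) /
                   (measure_pmf.expectation (G n) num_edges) ^ 2) \<longlonglongrightarrow> 0)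
       \<and> ((\<lambda>n. measure_pmf.expectation (G n) (Sigma2 n) /
                   (measure_pmf.expectation (G n) num_edges) ^ 2) \<longlonglongrightarrow> 0
          \<longleftrightarrow> conv_in_prob G (\<lambda>n. zeta n) 0)"
proof -
  obtain \<delta> where "0 < \<delta>" and \<delta>: "eventually (\<lambda>n. \<forall>i<s. \<delta> \<le> real (c n i) / real n) sequentially"
    using away_boundary by blast
  obtain \<delta>' where "0 < \<delta>'"
    and \<delta>': "eventually (\<lambda>n. \<delta>' \<le> sqrt (\<Sum>i<s. (real (c n i) / real n - 1 / real s)^2)) sequentially"
    using away_center by blast
  obtain \<delta>m where "0 < \<delta>m" and \<delta>m: "eventually (\<lambda>n. \<delta>m \<le> measure_pmf.expectation (G n) num_edges) sequentially"
    using Em_pos by blast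
  interpret colored_random_graphs s G c "\<delta> / 2" "\<delta> * \<delta>'^2 / 2"
  proof
    show "eventually (\<lambda>n. is_composition n s (c n) \<and> 6 \<le> n \<and> \<delta> / 2 \<le> pair_prob n s (c n)
        \<and> \<delta> * \<delta>'^2 / 2 \<le> cherry_prob n s (c n) - pair_prob n s (c n) ^ 2
        \<and> 0 < measure_pmf.expectation (G n) num_edges) sequentially"
      using eventually_pair_prob_and_cherry_gap[OF comp \<open>0 < \<delta>\<close> \<delta> \<open>0 < \<delta>'\<close> \<delta>'] \<delta>m
      by eventually_elim (use \<open>0 < \<delta>m\<close> in auto)
  qed (use graphs m_qm \<open>0 < \<delta>\<close> \<open>0 < \<delta>'\<close> in auto)
  show ?thesis
    using mono_edges_ratio_iff_mono_dev mono_dev_conv_quad_mean_iff degree_ratio_iff_mono_dev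
      degree_ratio_iff_Sigma2 degree_ratio_iff_zeta by simp
qed

end
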